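(* A linear functional $\phi$ on $ba(\mathcal A)$ is norm continuous if and only if there is a uniformly bounded net $(f_\alpha)_{\alpha\in\mathfrak A}$ in $\mathcal S(\mathcal A)$ which is Cauchy in $L^1(\mu)$ for every $\mu\in ba(\mathcal A)$, with $\limsup_\alpha\|f_\alpha\|_\infty=\|\phi\|$, such that $\phi(\mu)=\lim_\alpha\mu(f_\alpha)$ for all $\mu\in ba(\mathcal A)$.
   Context: $\mathcal A$ algebra of subsets of $\Omega$; $ba(\mathcal A)$ the Banach space of bounded finitely additive real set functions with $\|\mu\|=|\mu|(\Omega)$. $\mathcal S(\mathcal A)$ the $\mathcal A$-simple functions with sup norm; $\mu(f)=\int f\,d\mu$. A net $(f_\alpha)$ of simple functions is Cauchy in $L^1(\mu)$ if for every $\varepsilon>0$ there is $\alpha_0$ with $|\mu|(|f_{\alpha_1}-f_{\alpha_2}|)<\varepsilon$ for all $\alpha_1,\alpha_2\ge\alpha_0$. *)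

theory Defs
  imports "HOL-Analysis.Analysis"
begin

definition fin_additive :: "'a set set \<Rightarrow> ('a set \<Rightarrow> real) \<Rightarrow> bool" where
  "fin_additive A \<mu> \<longleftrightarrow>
     (\<forall>E\<in>A. \<forall>F\<in>A. E \<inter> F = {} \<longrightarrow> \<mu> (E \<union> F) = \<mu> E + \<mu> F)"

definition partition_sums :: "'a set set \<Rightarrow> ('a set \<Rightarrow> real) \<Rightarrow> 'a set \<Rightarrow> real set" where
  "partition_sums A \<mu> E =
     {(\<Sum>B\<in>P. \<bar>\<mu> B\<bar>) | P. finite P \<and> P \<subseteq> A \<and> disjoint P \<and> \<Union>P = E}"

definition tot_var :: "'a set set \<Rightarrow> ('a set \<Rightarrow> real) \<Rightarrow> 'a set \<Rightarrow> real" where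
  "tot_var A \<mu> E = Sup (partition_sums A \<mu> E)"

text \<open>ba(A): bounded finitely additive real set functions on A (taken to vanish off A,
  so that elements are determined by their values on A).\<close>
definition ba :: "'a set \<Rightarrow> 'a set set \<Rightarrow> ('a set \<Rightarrow> real) set" where
  "ba \<Omega> A = {\<mu>. fin_additive A \<mu> \<and> (\<forall>E. E \<notin> A \<longrightarrow> \<mu> E = 0)
                 \<and> bdd_above (partition_sums A \<mu> \<Omega>)}"

definition ba_norm :: "'a set \<Rightarrow> 'a set set \<Rightarrow> ('a set \<Rightarrow> real) \<Rightarrow> real" where
  "ba_norm \<Omega> A \<mu> = tot_var A \<mu> \<Omega>"

definition simple_fun :: "'a set \<Rightarrow> 'a set set \<Rightarrow> ('a \<Rightarrow> real) \<Rightarrow> bool" where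
  "simple_fun \<Omega> A f \<longleftrightarrow> finite (f ` \<Omega>) \<and> (\<forall>y. {x\<in>\<Omega>. f x = y} \<in> A)"

definition fa_integral :: "'a set \<Rightarrow> ('a set \<Rightarrow> real) \<Rightarrow> ('a \<Rightarrow> real) \<Rightarrow> real" where
  "fa_integral \<Omega> \<mu> f = (\<Sum>y\<in>f ` \<Omega>. y * \<mu> {x\<in>\<Omega>. f x = y})"

definition sup_norm :: "'a set \<Rightarrow> ('a \<Rightarrow> real) \<Rightarrow> real" where
  "sup_norm \<Omega> f = Sup (insert 0 ((\<lambda>x. \<bar>f x\<bar>) ` \<Omega>))"

definition linear_on_ba :: "'a set \<Rightarrow> 'a set set \<Rightarrow> (('a set \<Rightarrow> real) \<Rightarrow> real) \<Rightarrow> bool" where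
  "linear_on_ba \<Omega> A \<phi> \<longleftrightarrow>
     (\<forall>\<mu>\<in>ba \<Omega> A. \<forall>\<nu>\<in>ba \<Omega> A. \<phi> (\<lambda>E. \<mu> E + \<nu> E) = \<phi> \<mu> + \<phi> \<nu>) \<and>
     (\<forall>\<mu>\<in>ba \<Omega> A. \<forall>c::real. \<phi> (\<lambda>E. c * \<mu> E) = c * \<phi> \<mu>)"

definition norm_continuous_on_ba :: "'a set \<Rightarrow> 'a set set \<Rightarrow> (('a set \<Rightarrow> real) \<Rightarrow> real) \<Rightarrow> bool" where
  "norm_continuous_on_ba \<Omega> A \<phi> \<longleftrightarrow>
     (\<forall>\<mu>\<in>ba \<Omega> A. \<forall>\<epsilon>>0. \<exists>\<delta>>0. \<forall>\<nu>\<in>ba \<Omega> A.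
        ba_norm \<Omega> A (\<lambda>E. \<nu> E - \<mu> E) < \<delta> \<longrightarrow> \<bar>\<phi> \<nu> - \<phi> \<mu>\<bar> < \<epsilon>)"

definition functional_norm :: "'a set \<Rightarrow> 'a set set \<Rightarrow> (('a set \<Rightarrow> real) \<Rightarrow> real) \<Rightarrow> real" where
  "functional_norm \<Omega> A \<phi> = Sup {\<bar>\<phi> \<mu>\<bar> | \<mu>. \<mu> \<in> ba \<Omega> A \<and> ba_norm \<Omega> A \<mu> \<le> 1}"

definition directed_set :: "'i set \<Rightarrow> ('i \<Rightarrow> 'i \<Rightarrow> bool) \<Rightarrow> bool" where
  "directed_set I le \<longleftrightarrow> I \<noteq> {} \<and> (\<forall>a\<in>I. le a a) \<and>
     (\<forall>a\<in>I. \<forall>b\<in>I. \<forall>c\<in>I. le a b \<longrightarrow> le b c \<longrightarrow> le a c) \<and>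
     (\<forall>a\<in>I. \<forall>b\<in>I. \<exists>c\<in>I. le a c \<and> le b c)"

definition net_filter :: "'i set \<Rightarrow> ('i \<Rightarrow> 'i \<Rightarrow> bool) \<Rightarrow> 'i filter" where
  "net_filter I le = (INF a\<in>I. principal {b\<in>I. le a b})"

definition L1_cauchy_net :: "'a set \<Rightarrow> 'a set set \<Rightarrow> ('a set \<Rightarrow> real) \<Rightarrow> 'i set
      \<Rightarrow> ('i \<Rightarrow> 'i \<Rightarrow> bool) \<Rightarrow> ('i \<Rightarrow> 'a \<Rightarrow> real) \<Rightarrow> bool" where
  "L1_cauchy_net \<Omega> A \<mu> I le f \<longleftrightarrow>
     (\<forall>\<epsilon>>0. \<exists>a0\<in>I. \<forall>a1\<in>I. \<forall>a2\<in>I. le a0 a1 \<longrightarrow> le a0 a2 \<longrightarrow>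
        fa_integral \<Omega> (tot_var A \<mu>) (\<lambda>x. \<bar>f a1 x - f a2 x\<bar>) < \<epsilon>)"

definition representing_net :: "'a set \<Rightarrow> 'a set set \<Rightarrow> (('a set \<Rightarrow> real) \<Rightarrow> real)
      \<Rightarrow> 'i set \<Rightarrow> ('i \<Rightarrow> 'i \<Rightarrow> bool) \<Rightarrow> ('i \<Rightarrow> 'a \<Rightarrow> real) \<Rightarrow> bool" where
  "representing_net \<Omega> A \<phi> I le f \<longleftrightarrow>
     directed_set I le \<and>
     (\<forall>a\<in>I. simple_fun \<Omega> A (f a)) \<and>
     (\<exists>M. \<forall>a\<in>I. sup_norm \<Omega> (f a) \<le> M) \<and>
     (\<forall>\<mu>\<in>ba \<Omega> A. L1_cauchy_net \<Omega> A \<mu> I le f) \<and>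
     Limsup (net_filter I le) (\<lambda>a. ereal (sup_norm \<Omega> (f a))) = ereal (functional_norm \<Omega> A \<phi>) \<and>
     (\<forall>\<mu>\<in>ba \<Omega> A. ((\<lambda>a. fa_integral \<Omega> \<mu> (f a)) \<longlongrightarrow> \<phi> \<mu>) (net_filter I le))"

end

theory Submission
  imports Defs
begin

(* (<=) If phi(mu) = lim mu(f_a) with sup_a ||f_a|| <= B, then |mu(f_a)| <= B ||mu|| passes
   to the limit, so phi is bounded and therefore norm continuous.

   (=>) Let K = ||phi||. For a nonnegative m in ba(A) the set function
   psi_m(E) = phi(m restricted to E) is finitely additive with |psi_m| <= K m. Its quotients
   k_P = sum_B psi_m(B)/m(B) 1_B along finite partitions P form an L^2(m)-bounded martingale,
   so choosing P of almost maximal energy makes them L^1(m)-Cauchy along refinements. This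
   yields one simple f with |f| <= K approximating phi within eps on every rho dominated by m.
   Indexing such approximants by pairs (m, n), ordered pointwise, gives the net: it converges
   to phi, is L^1(mu)-Cauchy (test against rho = sgn(f_1 - f_2)|mu|), and has
   limsup ||f_a|| = K. *)

section \<open>Finite partitions and blockwise constant functions\<close>

definition is_partition :: "'a set \<Rightarrow> 'a set set \<Rightarrow> 'a set set \<Rightarrow> bool" where
  "is_partition \<Omega> A P \<longleftrightarrow> finite P \<and> P \<subseteq> A \<and> disjoint P \<and> \<Union>P = \<Omega>"

definition blockwise_const :: "'a set set \<Rightarrow> ('a \<Rightarrow> real) \<Rightarrow> bool" where
  "blockwise_const P f \<longleftrightarrow> (\<forall>D\<in>P. \<forall>x\<in>D. \<forall>y\<in>D. f x = f y)"

definition block_point :: "'a set \<Rightarrow> 'a" where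
  "block_point D = (SOME x. x \<in> D)"

definition finer :: "'a set set \<Rightarrow> 'a set set \<Rightarrow> bool" where
  "finer Q P \<longleftrightarrow> (\<forall>D\<in>Q. \<exists>B\<in>P. D \<subseteq> B)"

definition partition_meet :: "'a set set \<Rightarrow> 'a set set \<Rightarrow> 'a set set" where
  "partition_meet P Q = (\<lambda>(B, D). B \<inter> D) ` (P \<times> Q)"

definition level_partition :: "'a set \<Rightarrow> ('a \<Rightarrow> real) \<Rightarrow> 'a set set" where
  "level_partition \<Omega> f = (\<lambda>y. {x\<in>\<Omega>. f x = y}) ` (f ` \<Omega>)"

lemma block_point_in: "D \<noteq> {} \<Longrightarrow> block_point D \<in> D"
  unfolding block_point_def by (auto intro: someI)

lemma blockwise_const_finer: "blockwise_const P f \<Longrightarrow> finer Q P \<Longrightarrow> blockwise_const Q f"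
  unfolding blockwise_const_def finer_def by (meson subsetD)

lemma blockwise_const_comb:
  "blockwise_const P f \<Longrightarrow> blockwise_const P g \<Longrightarrow> blockwise_const P (\<lambda>x. F (f x) (g x))"
  unfolding blockwise_const_def by metis

lemma blockwise_const_const: "blockwise_const P (\<lambda>x. c)"
  unfolding blockwise_const_def by simp

lemma finer_trans: "finer R Q \<Longrightarrow> finer Q P \<Longrightarrow> finer R P"
  unfolding finer_def by (meson order_trans)

lemma finer_partition_meet:
  "finer (partition_meet P Q) P" "finer (partition_meet P Q) Q"
  unfolding finer_def partition_meet_def by auto

lemma partition_cover: "is_partition \<Omega> A P \<Longrightarrow> x \<in> \<Omega> \<Longrightarrow> \<exists>D\<in>P. x \<in> D"
  unfolding is_partition_def by auto

lemma partition_block_unique: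
  "is_partition \<Omega> A P \<Longrightarrow> D \<in> P \<Longrightarrow> D' \<in> P \<Longrightarrow> x \<in> D \<Longrightarrow> x \<in> D' \<Longrightarrow> D = D'"
  unfolding is_partition_def disjoint_def by blast

lemma partition_block_subset: "is_partition \<Omega> A P \<Longrightarrow> D \<in> P \<Longrightarrow> D \<subseteq> \<Omega>"
  unfolding is_partition_def by auto

lemma partition_block_sets: "is_partition \<Omega> A P \<Longrightarrow> D \<in> P \<Longrightarrow> D \<in> A"
  unfolding is_partition_def by auto

lemma blockwise_const_val:
  "blockwise_const P f \<Longrightarrow> D \<in> P \<Longrightarrow> x \<in> D \<Longrightarrow> f x = f (block_point D)"
  by (metis blockwise_const_def empty_iff block_point_in)

lemma partition_sum_indicator:
  assumes P: "is_partition \<Omega> A P" and B: "B \<in> P" and x: "x \<in> B"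
  shows "(\<Sum>C\<in>P. a C * indicator C x) = (a B :: real)"
proof -
  have "(\<Sum>C\<in>P. a C * indicator C x) = a B * indicator B x + (\<Sum>C\<in>P - {B}. a C * indicator C x)"
    using P B unfolding is_partition_def by (intro sum.remove) auto
  also have "(\<Sum>C\<in>P - {B}. a C * indicator C x) = 0"
    using partition_block_unique[OF P B _ x] by (intro sum.neutral) (auto simp: indicator_def)
  finally show ?thesis using x by simp
qed

lemma blockwise_const_indicator:
  assumes P: "is_partition \<Omega> A P" and C: "C \<in> P"
  shows "blockwise_const P (indicator C)"
  unfolding blockwise_const_def using partition_block_unique[OF P _ C] by (metis indicator_simps)

context algebra
begin

lemma is_partition_meet:
  assumes P: "is_partition \<Omega> M P" and Q: "is_partition \<Omega> M Q"
  shows "is_partition \<Omega> M (partition_meet P Q)"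
  unfolding is_partition_def
proof (intro conjI)
  show "finite (partition_meet P Q)" "partition_meet P Q \<subseteq> M"
    using P Q unfolding is_partition_def partition_meet_def by auto
  show "disjoint (partition_meet P Q)"
  proof (rule pairwiseI)
    fix X Y assume X: "X \<in> partition_meet P Q" and Y: "Y \<in> partition_meet P Q" and "X \<noteq> Y"
    obtain B D B' D' where "B \<in> P" "D \<in> Q" "X = B \<inter> D" "B' \<in> P" "D' \<in> Q" "Y = B' \<inter> D'"
      using X Y unfolding partition_meet_def by auto
    moreover have "B = B' \<or> B \<inter> B' = {}"
      using P \<open>B \<in> P\<close> \<open>B' \<in> P\<close> unfolding is_partition_def disjoint_def by auto
    moreover have "D = D' \<or> D \<inter> D' = {}"
      using Q \<open>D \<in> Q\<close> \<open>D' \<in> Q\<close> unfolding is_partition_def disjoint_def by auto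
    ultimately show "disjnt X Y" using \<open>X \<noteq> Y\<close> unfolding disjnt_def by auto
  qed
  show "\<Union>(partition_meet P Q) = \<Omega>"
    using P Q unfolding is_partition_def partition_meet_def by fastforce
qed

lemma partition_trivial: "is_partition \<Omega> M {\<Omega>}"
  unfolding is_partition_def using top by auto

lemma partition_two: "E \<in> M \<Longrightarrow> is_partition \<Omega> M {E, \<Omega> - E}"
  unfolding is_partition_def disjoint_def using sets_into_space by auto

lemma fin_additive_empty: "fin_additive M \<mu> \<Longrightarrow> \<mu> {} = 0"
  unfolding fin_additive_def using empty_sets by (metis Un_empty_left inf_bot_left add_cancel_right_right)

lemma fin_additive_Union:
  assumes fa: "fin_additive M \<mu>"
  shows "finite P \<Longrightarrow> P \<subseteq> M \<Longrightarrow> disjoint P \<Longrightarrow> \<mu> (\<Union>P) = (\<Sum>B\<in>P. \<mu> B)"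
proof (induction P rule: finite_induct)
  case empty
  then show ?case using fin_additive_empty[OF fa] by simp
next
  case (insert B P)
  have "B \<inter> \<Union>P = {}" using insert.prems(2) insert.hyps(2) unfolding disjoint_def by auto
  moreover have "\<Union>P \<in> M" using insert finite_Union by auto
  ultimately have "\<mu> (B \<union> \<Union>P) = \<mu> B + \<mu> (\<Union>P)" using fa insert.prems unfolding fin_additive_def by auto
  moreover have "disjoint P" using insert.prems(2) by (auto simp: disjoint_def)
  ultimately show ?case using insert by simp
qed

end

section \<open>Simple functions and their integrals\<close>

context algebra
begin

lemma simple_fun_level_partition:
  assumes "simple_fun \<Omega> M f"
  shows "is_partition \<Omega> M (level_partition \<Omega> f)" "blockwise_const (level_partition \<Omega> f) f"
proof -
  show "is_partition \<Omega> M (level_partition \<Omega> f)"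
    using assms unfolding simple_fun_def is_partition_def level_partition_def disjoint_def by auto
  show "blockwise_const (level_partition \<Omega> f) f"
    unfolding blockwise_const_def level_partition_def by auto
qed

lemma blockwise_const_values:
  assumes P: "is_partition \<Omega> M P" and f: "blockwise_const P f"
  shows "f ` \<Omega> = (\<lambda>D. f (block_point D)) ` {D\<in>P. D \<noteq> {}}"
proof
  show "f ` \<Omega> \<subseteq> (\<lambda>D. f (block_point D)) ` {D\<in>P. D \<noteq> {}}"
  proof
    fix y assume "y \<in> f ` \<Omega>"
    then obtain x D where "x \<in> \<Omega>" "y = f x" "D \<in> P" "x \<in> D" using partition_cover[OF P] by blast
    then show "y \<in> (\<lambda>D. f (block_point D)) ` {D\<in>P. D \<noteq> {}}"
      using blockwise_const_val[OF f] by auto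
  qed
  show "(\<lambda>D. f (block_point D)) ` {D\<in>P. D \<noteq> {}} \<subseteq> f ` \<Omega>"
  proof (rule image_subsetI)
    fix D assume "D \<in> {D\<in>P. D \<noteq> {}}"
    then have D: "D \<in> P" "D \<noteq> {}" by auto
    have "block_point D \<in> \<Omega>" using partition_block_subset[OF P D(1)] block_point_in[OF D(2)] by auto
    then show "f (block_point D) \<in> f ` \<Omega>" by (rule imageI)
  qed
qed

lemma blockwise_const_level_set:
  assumes P: "is_partition \<Omega> M P" and f: "blockwise_const P f"
  shows "{x\<in>\<Omega>. f x = y} = \<Union>{D\<in>P. D \<noteq> {} \<and> f (block_point D) = y}"
proof
  show "{x\<in>\<Omega>. f x = y} \<subseteq> \<Union>{D\<in>P. D \<noteq> {} \<and> f (block_point D) = y}"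
  proof
    fix x assume "x \<in> {x\<in>\<Omega>. f x = y}"
    then obtain D where "D \<in> P" "x \<in> D" "f x = y" using partition_cover[OF P] by auto
    then show "x \<in> \<Union>{D\<in>P. D \<noteq> {} \<and> f (block_point D) = y}"
      using blockwise_const_val[OF f] by auto
  qed
  show "\<Union>{D\<in>P. D \<noteq> {} \<and> f (block_point D) = y} \<subseteq> {x\<in>\<Omega>. f x = y}"
  proof
    fix x assume "x \<in> \<Union>{D\<in>P. D \<noteq> {} \<and> f (block_point D) = y}"
    then obtain D where "D \<in> P" "x \<in> D" "f (block_point D) = y" by auto
    then show "x \<in> {x\<in>\<Omega>. f x = y}" using blockwise_const_val[OF f] partition_block_subset[OF P] by auto
  qed
qed

lemma blockwise_const_simple_fun:
  assumes P: "is_partition \<Omega> M P" and f: "blockwise_const P f"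
  shows "simple_fun \<Omega> M f"
  unfolding simple_fun_def
proof (intro conjI allI)
  show "finite (f ` \<Omega>)"
    using P unfolding blockwise_const_values[OF P f] is_partition_def by simp
  have "\<Union>{D\<in>P. D \<noteq> {} \<and> f (block_point D) = y} \<in> M" for y
    using P unfolding is_partition_def by (intro finite_Union) auto
  then show "{x\<in>\<Omega>. f x = y} \<in> M" for y
    unfolding blockwise_const_level_set[OF P f] .
qed

lemma simple_fun_common_partition:
  assumes f: "simple_fun \<Omega> M f" and g: "simple_fun \<Omega> M g"
  obtains P where "is_partition \<Omega> M P" "blockwise_const P f" "blockwise_const P g"
proof
  let ?P = "partition_meet (level_partition \<Omega> f) (level_partition \<Omega> g)"
  note Pf = simple_fun_level_partition[OF f] and Pg = simple_fun_level_partition[OF g]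
  show "is_partition \<Omega> M ?P" using is_partition_meet[OF Pf(1) Pg(1)] .
  show "blockwise_const ?P f" using blockwise_const_finer[OF Pf(2) finer_partition_meet(1)] .
  show "blockwise_const ?P g" using blockwise_const_finer[OF Pg(2) finer_partition_meet(2)] .
qed

lemma simple_fun_comb:
  assumes "simple_fun \<Omega> M f" "simple_fun \<Omega> M g"
  shows "simple_fun \<Omega> M (\<lambda>x. F (f x) (g x))"
proof -
  obtain P where P: "is_partition \<Omega> M P" "blockwise_const P f" "blockwise_const P g"
    using simple_fun_common_partition[OF assms] .
  show ?thesis using blockwise_const_simple_fun[OF P(1) blockwise_const_comb[OF P(2,3)]] .
qed

lemma simple_fun_comb1: "simple_fun \<Omega> M f \<Longrightarrow> simple_fun \<Omega> M (\<lambda>x. F (f x))"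
  using simple_fun_comb[of f f "\<lambda>a b. F a"] by simp

lemma simple_fun_const: "simple_fun \<Omega> M (\<lambda>x. c)"
  using blockwise_const_simple_fun[OF partition_trivial blockwise_const_const] .

lemma simple_fun_indicator: "E \<in> M \<Longrightarrow> simple_fun \<Omega> M (indicator E)"
  using blockwise_const_simple_fun[OF partition_two blockwise_const_indicator[OF partition_two]] by simp

lemma simple_fun_sum:
  "finite S \<Longrightarrow> (\<And>i. i \<in> S \<Longrightarrow> simple_fun \<Omega> M (f i)) \<Longrightarrow> simple_fun \<Omega> M (\<lambda>x. \<Sum>i\<in>S. f i x)"
proof (induction S rule: finite_induct)
  case empty
  then show ?case using simple_fun_const by simp
next
  case (insert a S)
  then show ?case using simple_fun_comb[of "f a" "\<lambda>x. \<Sum>i\<in>S. f i x" "(+)"] by simp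
qed

lemma fa_integral_partition:
  assumes fa: "fin_additive M \<mu>" and P: "is_partition \<Omega> M P" and f: "blockwise_const P f"
  shows "fa_integral \<Omega> \<mu> f = (\<Sum>D\<in>P. f (block_point D) * \<mu> D)"
proof -
  define P' where "P' = {D\<in>P. D \<noteq> {}}"
  have P': "finite P'" "P' \<subseteq> M" "disjoint P'"
    using P unfolding P'_def is_partition_def disjoint_def by auto
  have "\<mu> {x\<in>\<Omega>. f x = y} = (\<Sum>D\<in>{D\<in>P'. f (block_point D) = y}. \<mu> D)" for y
  proof -
    have "{D\<in>P. D \<noteq> {} \<and> f (block_point D) = y} = {D\<in>P'. f (block_point D) = y}"
      unfolding P'_def by auto
    then show ?thesis
      unfolding blockwise_const_level_set[OF P f] using P'
      by (auto intro!: fin_additive_Union[OF fa] simp: disjoint_def)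
  qed
  then have "fa_integral \<Omega> \<mu> f =
      (\<Sum>y\<in>f ` \<Omega>. \<Sum>D\<in>{D\<in>P'. f (block_point D) = y}. f (block_point D) * \<mu> D)"
    unfolding fa_integral_def by (auto simp: sum_distrib_left intro!: sum.cong)
  also have "\<dots> = (\<Sum>D\<in>P'. f (block_point D) * \<mu> D)"
    using sum.group[OF P'(1), of "f ` \<Omega>" "\<lambda>D. f (block_point D)" "\<lambda>D. f (block_point D) * \<mu> D"]
      blockwise_const_values[OF P f, folded P'_def] P'(1) by auto
  also have "\<dots> = (\<Sum>D\<in>P. f (block_point D) * \<mu> D)"
    using P fin_additive_empty[OF fa] unfolding P'_def is_partition_def
    by (intro sum.mono_neutral_left) auto
  finally show ?thesis .
qed

lemma fa_integral_cong:
  "(\<And>x. x \<in> \<Omega> \<Longrightarrow> f x = g x) \<Longrightarrow> fa_integral \<Omega> \<mu> f = fa_integral \<Omega> \<mu> g"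
  unfolding fa_integral_def by (intro sum.cong) (auto intro!: arg_cong[where f=\<mu>])

lemma fa_integral_measure_add:
  "fa_integral \<Omega> (\<lambda>E. \<mu> E + \<nu> E) f = fa_integral \<Omega> \<mu> f + fa_integral \<Omega> \<nu> f"
  unfolding fa_integral_def by (simp add: sum.distrib algebra_simps)

lemma fa_integral_measure_cong:
  "simple_fun \<Omega> M f \<Longrightarrow> (\<And>E. E \<in> M \<Longrightarrow> \<mu> E = \<nu> E) \<Longrightarrow> fa_integral \<Omega> \<mu> f = fa_integral \<Omega> \<nu> f"
  unfolding fa_integral_def simple_fun_def by (intro sum.cong) auto

lemma fa_integral_add:
  assumes fa: "fin_additive M \<mu>" and f: "simple_fun \<Omega> M f" and g: "simple_fun \<Omega> M g"
  shows "fa_integral \<Omega> \<mu> (\<lambda>x. f x + g x) = fa_integral \<Omega> \<mu> f + fa_integral \<Omega> \<mu> g"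
proof -
  obtain P where P: "is_partition \<Omega> M P" "blockwise_const P f" "blockwise_const P g"
    using simple_fun_common_partition[OF f g] .
  have "blockwise_const P (\<lambda>x. f x + g x)" using blockwise_const_comb[OF P(2,3), of "(+)"] .
  then show ?thesis using fa_integral_partition[OF fa P(1)] P by (simp add: sum.distrib algebra_simps)
qed

lemma fa_integral_cmult:
  assumes fa: "fin_additive M \<mu>" and f: "simple_fun \<Omega> M f"
  shows "fa_integral \<Omega> \<mu> (\<lambda>x. c * f x) = c * fa_integral \<Omega> \<mu> f"
proof -
  note P = simple_fun_level_partition[OF f]
  have "blockwise_const (level_partition \<Omega> f) (\<lambda>x. c * f x)"
    using blockwise_const_comb[OF P(2) P(2), of "\<lambda>a b. c * a"] .
  then show ?thesis
    using fa_integral_partition[OF fa P(1)] P by (simp add: sum_distrib_left algebra_simps)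
qed

lemma fa_integral_diff:
  assumes fa: "fin_additive M \<mu>" and f: "simple_fun \<Omega> M f" and g: "simple_fun \<Omega> M g"
  shows "fa_integral \<Omega> \<mu> (\<lambda>x. f x - g x) = fa_integral \<Omega> \<mu> f - fa_integral \<Omega> \<mu> g"
proof -
  obtain P where P: "is_partition \<Omega> M P" "blockwise_const P f" "blockwise_const P g"
    using simple_fun_common_partition[OF f g] .
  have "blockwise_const P (\<lambda>x. f x - g x)" using blockwise_const_comb[OF P(2,3), of "(-)"] .
  then show ?thesis using fa_integral_partition[OF fa P(1)] P by (simp add: sum_subtractf algebra_simps)
qed

lemma fa_integral_mono:
  assumes fa: "fin_additive M \<mu>" and pos: "\<And>E. E \<in> M \<Longrightarrow> 0 \<le> \<mu> E"
    and f: "simple_fun \<Omega> M f" and g: "simple_fun \<Omega> M g" and le: "\<And>x. x \<in> \<Omega> \<Longrightarrow> f x \<le> g x"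
  shows "fa_integral \<Omega> \<mu> f \<le> fa_integral \<Omega> \<mu> g"
proof -
  obtain P where P: "is_partition \<Omega> M P" "blockwise_const P f" "blockwise_const P g"
    using simple_fun_common_partition[OF f g] .
  have "f (block_point D) * \<mu> D \<le> g (block_point D) * \<mu> D" if D: "D \<in> P" for D
  proof (cases "D = {}")
    case True
    then show ?thesis using fin_additive_empty[OF fa] by simp
  next
    case False
    then have "block_point D \<in> \<Omega>" using block_point_in[OF False] partition_block_subset[OF P(1) D] by auto
    then show ?thesis using le pos partition_block_sets[OF P(1) D] by (simp add: mult_right_mono)
  qed
  then show ?thesis using fa_integral_partition[OF fa P(1)] P by (simp add: sum_mono)
qed

lemma fa_integral_abs_le:
  assumes fa: "fin_additive M \<mu>" and pos: "\<And>E. E \<in> M \<Longrightarrow> 0 \<le> \<mu> E" and u: "simple_fun \<Omega> M u"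
  shows "\<bar>fa_integral \<Omega> \<mu> u\<bar> \<le> fa_integral \<Omega> \<mu> (\<lambda>x. \<bar>u x\<bar>)"
proof -
  have "fa_integral \<Omega> \<mu> u \<le> fa_integral \<Omega> \<mu> (\<lambda>x. \<bar>u x\<bar>)"
    by (rule fa_integral_mono[OF fa pos u simple_fun_comb1[OF u]]) auto
  moreover have "- fa_integral \<Omega> \<mu> u \<le> fa_integral \<Omega> \<mu> (\<lambda>x. \<bar>u x\<bar>)"
    using fa_integral_mono[OF fa pos simple_fun_comb1[OF u, of uminus] simple_fun_comb1[OF u, of abs]]
      fa_integral_cmult[OF fa u, of "-1"] by simp
  ultimately show ?thesis by linarith
qed

lemma fa_integral_indicator:
  assumes fa: "fin_additive M \<mu>" and E: "E \<in> M"
  shows "fa_integral \<Omega> \<mu> (indicator E) = \<mu> E"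
proof (cases "E = \<Omega> - E")
  case True
  then have "E = {}" "\<Omega> = {}" by auto
  then show ?thesis using fin_additive_empty[OF fa] unfolding fa_integral_def by simp
next
  case False
  note P = partition_two[OF E]
  have "fa_integral \<Omega> \<mu> (indicator E) = (\<Sum>D\<in>{E, \<Omega> - E}. indicator E (block_point D) * \<mu> D)"
    using fa_integral_partition[OF fa P blockwise_const_indicator[OF P]] by simp
  also have "\<dots> = indicator E (block_point E) * \<mu> E + indicator E (block_point (\<Omega> - E)) * \<mu> (\<Omega> - E)"
  proof -
    have "(\<Sum>D\<in>{E, \<Omega> - E}. g D) = g E + g (\<Omega> - E)" for g :: "'a set \<Rightarrow> real"
      using False by simp
    then show ?thesis .
  qed
  also have "\<dots> = \<mu> E"
  proof -
    have "indicator E (block_point E) * \<mu> E = \<mu> E"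
      using block_point_in[of E] fin_additive_empty[OF fa] by (cases "E = {}") auto
    moreover have "indicator E (block_point (\<Omega> - E)) * \<mu> (\<Omega> - E) = 0"
    proof (cases "\<Omega> - E = {}")
      case True
      then have "\<mu> (\<Omega> - E) = 0" using fin_additive_empty[OF fa] by metis
      then show ?thesis by simp
    next
      case False
      then have "block_point (\<Omega> - E) \<in> \<Omega> - E" by (rule block_point_in)
      then show ?thesis by simp
    qed
    ultimately show ?thesis by linarith
  qed
  finally show ?thesis .
qed

lemma fa_integral_const:
  assumes fa: "fin_additive M \<mu>"
  shows "fa_integral \<Omega> \<mu> (\<lambda>x. c) = c * \<mu> \<Omega>"
proof -
  have "fa_integral \<Omega> \<mu> (\<lambda>x. c) = fa_integral \<Omega> \<mu> (\<lambda>x. c * indicator \<Omega> x)"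
    by (rule fa_integral_cong) simp
  also have "\<dots> = c * \<mu> \<Omega>"
    using fa_integral_cmult[OF fa simple_fun_indicator[OF top]] fa_integral_indicator[OF fa top] by simp
  finally show ?thesis .
qed

lemma fa_integral_sum:
  assumes fa: "fin_additive M \<mu>"
  shows "finite S \<Longrightarrow> (\<And>i. i \<in> S \<Longrightarrow> simple_fun \<Omega> M (f i)) \<Longrightarrow>
    fa_integral \<Omega> \<mu> (\<lambda>x. \<Sum>i\<in>S. f i x) = (\<Sum>i\<in>S. fa_integral \<Omega> \<mu> (f i))"
proof (induction S rule: finite_induct)
  case empty
  then show ?case using fa_integral_const[OF fa, of 0] by simp
next
  case (insert a S)
  then show ?case
    using fa_integral_add[OF fa _ simple_fun_sum[of S f], of "f a"] by simp
qed

end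

section \<open>The space ba(A) and total variation\<close>

definition nonneg_ba :: "'a set \<Rightarrow> 'a set set \<Rightarrow> ('a set \<Rightarrow> real) \<Rightarrow> bool" where
  "nonneg_ba \<Omega> A m \<longleftrightarrow> m \<in> ba \<Omega> A \<and> (\<forall>E\<in>A. 0 \<le> m E)"

definition tv_measure :: "'a set set \<Rightarrow> ('a set \<Rightarrow> real) \<Rightarrow> 'a set \<Rightarrow> real" where
  "tv_measure A \<mu> = (\<lambda>E. if E \<in> A then tot_var A \<mu> E else 0)"

context algebra
begin

lemma ba_fin_additive: "\<mu> \<in> ba \<Omega> M \<Longrightarrow> fin_additive M \<mu>"
  unfolding ba_def by auto

lemma ba_vanishes: "\<mu> \<in> ba \<Omega> M \<Longrightarrow> E \<notin> M \<Longrightarrow> \<mu> E = 0"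
  unfolding ba_def by auto

lemma partition_sums_memI:
  "finite P \<Longrightarrow> P \<subseteq> M \<Longrightarrow> disjoint P \<Longrightarrow> \<Union>P = E \<Longrightarrow> (\<Sum>B\<in>P. \<bar>\<mu> B\<bar>) \<in> partition_sums M \<mu> E"
  unfolding partition_sums_def by auto

text \<open>Any finite disjoint family in A has variation sum at most \<open>\<parallel>\<mu>\<parallel>\<close>: complete it to a
  partition of \<Omega>.\<close>
lemma disjoint_sum_le_norm:
  assumes mu: "\<mu> \<in> ba \<Omega> M" and P: "finite P" "P \<subseteq> M" "disjoint P"
  shows "(\<Sum>B\<in>P. \<bar>\<mu> B\<bar>) \<le> tot_var M \<mu> \<Omega>"
proof -
  let ?R = "insert (\<Omega> - \<Union>P) P"
  have "\<Union>P \<in> M" using P by (intro finite_Union) auto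
  then have "\<Omega> - \<Union>P \<in> M" by (rule compl_sets)
  moreover have "disjoint ?R" using P(3) unfolding disjoint_def by auto
  moreover have "\<Union>?R = \<Omega>" using P sets_into_space by auto
  ultimately have "(\<Sum>B\<in>?R. \<bar>\<mu> B\<bar>) \<le> tot_var M \<mu> \<Omega>"
    unfolding tot_var_def using P mu unfolding ba_def
    by (intro cSup_upper partition_sums_memI) auto
  moreover have "(\<Sum>B\<in>P. \<bar>\<mu> B\<bar>) \<le> (\<Sum>B\<in>?R. \<bar>\<mu> B\<bar>)"
    using P by (intro sum_mono2) auto
  ultimately show ?thesis by linarith
qed

lemma partition_sums_bdd:
  assumes mu: "\<mu> \<in> ba \<Omega> M" shows "bdd_above (partition_sums M \<mu> E)"
proof (rule bdd_aboveI)
  fix s assume "s \<in> partition_sums M \<mu> E"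
  then obtain P where "finite P" "P \<subseteq> M" "disjoint P" "s = (\<Sum>B\<in>P. \<bar>\<mu> B\<bar>)"
    unfolding partition_sums_def by auto
  then show "s \<le> tot_var M \<mu> \<Omega>" using disjoint_sum_le_norm[OF mu] by simp
qed

lemma tot_var_upper:
  assumes "\<mu> \<in> ba \<Omega> M" "finite P" "P \<subseteq> M" "disjoint P" "\<Union>P = E"
  shows "(\<Sum>B\<in>P. \<bar>\<mu> B\<bar>) \<le> tot_var M \<mu> E"
  unfolding tot_var_def using assms partition_sums_bdd by (intro cSup_upper partition_sums_memI) auto

lemma tot_var_least:
  assumes E: "E \<in> M"
    and le: "\<And>P. finite P \<Longrightarrow> P \<subseteq> M \<Longrightarrow> disjoint P \<Longrightarrow> \<Union>P = E \<Longrightarrow> (\<Sum>B\<in>P. \<bar>\<mu> B\<bar>) \<le> c"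
  shows "tot_var M \<mu> E \<le> c"
proof -
  have "partition_sums M \<mu> E \<noteq> {}" using partition_sums_memI[of "{E}" E \<mu>] E by auto
  then show ?thesis unfolding tot_var_def using le by (intro cSup_least) (auto simp: partition_sums_def)
qed

lemma abs_le_tot_var: "\<mu> \<in> ba \<Omega> M \<Longrightarrow> E \<in> M \<Longrightarrow> \<bar>\<mu> E\<bar> \<le> tot_var M \<mu> E"
  using tot_var_upper[of \<mu> "{E}" E] by auto

lemma tot_var_nonneg: "\<mu> \<in> ba \<Omega> M \<Longrightarrow> E \<in> M \<Longrightarrow> 0 \<le> tot_var M \<mu> E"
  using abs_le_tot_var by (meson abs_ge_zero order_trans)

lemma norm_nonneg_ba: "\<mu> \<in> ba \<Omega> M \<Longrightarrow> 0 \<le> tot_var M \<mu> \<Omega>"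
  using tot_var_nonneg top by auto

text \<open>Total variation is finitely additive: subadditivity by splitting each block of a
  partition of \<open>E \<union> F\<close>, superadditivity by joining partitions of E and of F.\<close>
lemma tot_var_subadditive:
  assumes mu: "\<mu> \<in> ba \<Omega> M" and E: "E \<in> M" and F: "F \<in> M" and EF: "E \<inter> F = {}"
  shows "tot_var M \<mu> (E \<union> F) \<le> tot_var M \<mu> E + tot_var M \<mu> F"
proof (rule tot_var_least)
  show "E \<union> F \<in> M" using E F by auto
  fix P assume P: "finite P" "P \<subseteq> M" "disjoint P" "\<Union>P = E \<union> F"
  have fa: "fin_additive M \<mu>" by (rule ba_fin_additive[OF mu])
  have trace: "(\<Sum>B\<in>P. \<bar>\<mu> (B \<inter> G)\<bar>) \<le> tot_var M \<mu> G" if G: "G \<in> M" "G \<subseteq> E \<union> F" for G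
  proof -
    have "(\<Sum>B\<in>P. \<bar>\<mu> (B \<inter> G)\<bar>) = (\<Sum>D\<in>(\<lambda>B. B \<inter> G) ` P. \<bar>\<mu> D\<bar>)"
    proof (rule sum.reindex_nontrivial[symmetric, unfolded o_def])
      fix x y assume "x \<in> P" "y \<in> P" "x \<noteq> y" "x \<inter> G = y \<inter> G"
      then have "x \<inter> G = {}" using P(3) unfolding disjoint_def by auto
      then show "\<bar>\<mu> (x \<inter> G)\<bar> = 0" using fin_additive_empty[OF fa] by simp
    qed (use P in simp)
    also have "\<dots> \<le> tot_var M \<mu> G"
      using P G by (intro tot_var_upper[OF mu]) (auto simp: disjoint_def)
    finally show ?thesis .
  qed
  have "\<bar>\<mu> B\<bar> \<le> \<bar>\<mu> (B \<inter> E)\<bar> + \<bar>\<mu> (B \<inter> F)\<bar>" if B: "B \<in> P" for B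
  proof -
    have "B = (B \<inter> E) \<union> (B \<inter> F)" using P(4) B by auto
    moreover have "B \<inter> E \<in> M" "B \<inter> F \<in> M" "(B \<inter> E) \<inter> (B \<inter> F) = {}"
      using E F B P(2) EF by auto
    then have "\<mu> ((B \<inter> E) \<union> (B \<inter> F)) = \<mu> (B \<inter> E) + \<mu> (B \<inter> F)"
      using fa unfolding fin_additive_def by simp
    ultimately show ?thesis using abs_triangle_ineq by metis
  qed
  then have "(\<Sum>B\<in>P. \<bar>\<mu> B\<bar>) \<le> (\<Sum>B\<in>P. \<bar>\<mu> (B \<inter> E)\<bar>) + (\<Sum>B\<in>P. \<bar>\<mu> (B \<inter> F)\<bar>)"
    by (simp add: sum.distrib[symmetric] sum_mono)
  then show "(\<Sum>B\<in>P. \<bar>\<mu> B\<bar>) \<le> tot_var M \<mu> E + tot_var M \<mu> F"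
    using trace[OF E] trace[OF F] by auto
qed

lemma tot_var_superadditive:
  assumes mu: "\<mu> \<in> ba \<Omega> M" and E: "E \<in> M" and F: "F \<in> M" and EF: "E \<inter> F = {}"
  shows "tot_var M \<mu> E + tot_var M \<mu> F \<le> tot_var M \<mu> (E \<union> F)"
proof -
  have join: "(\<Sum>B\<in>P1. \<bar>\<mu> B\<bar>) + (\<Sum>B\<in>P2. \<bar>\<mu> B\<bar>) \<le> tot_var M \<mu> (E \<union> F)"
    if P1: "finite P1" "P1 \<subseteq> M" "disjoint P1" "\<Union>P1 = E"
      and P2: "finite P2" "P2 \<subseteq> M" "disjoint P2" "\<Union>P2 = F" for P1 P2
  proof -
    have "P1 \<inter> P2 \<subseteq> {{}}" using P1(4) P2(4) EF by auto
    then have "(\<Sum>B\<in>P1 \<inter> P2. \<bar>\<mu> B\<bar>) = 0"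
      using fin_additive_empty[OF ba_fin_additive[OF mu]] by (intro sum.neutral) auto
    then have "(\<Sum>B\<in>P1 \<union> P2. \<bar>\<mu> B\<bar>) = (\<Sum>B\<in>P1. \<bar>\<mu> B\<bar>) + (\<Sum>B\<in>P2. \<bar>\<mu> B\<bar>)"
      using sum.union_inter[of P1 P2 "\<lambda>B. \<bar>\<mu> B\<bar>"] P1 P2 by simp
    moreover have "disjoint (P1 \<union> P2)" using disjoint_union[OF P1(3) P2(3)] P1(4) P2(4) EF by simp
    ultimately show ?thesis using P1 P2 tot_var_upper[OF mu, of "P1 \<union> P2" "E \<union> F"] by auto
  qed
  have ne: "partition_sums M \<mu> G \<noteq> {}" if "G \<in> M" for G
    using partition_sums_memI[of "{G}" G \<mu>] that by auto
  have "s1 \<le> tot_var M \<mu> (E \<union> F) - tot_var M \<mu> F" if s1: "s1 \<in> partition_sums M \<mu> E" for s1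
  proof -
    have "tot_var M \<mu> F \<le> tot_var M \<mu> (E \<union> F) - s1"
      unfolding tot_var_def[of M \<mu> F] using ne[OF F] s1 join
      by (intro cSup_least) (auto simp: partition_sums_def algebra_simps)
    then show ?thesis by linarith
  qed
  then have "tot_var M \<mu> E \<le> tot_var M \<mu> (E \<union> F) - tot_var M \<mu> F"
    unfolding tot_var_def[of M \<mu> E] using ne[OF E] by (intro cSup_least) auto
  then show ?thesis by linarith
qed

lemma tot_var_additive:
  assumes "\<mu> \<in> ba \<Omega> M" "E \<in> M" "F \<in> M" "E \<inter> F = {}"
  shows "tot_var M \<mu> (E \<union> F) = tot_var M \<mu> E + tot_var M \<mu> F"
  using tot_var_subadditive[OF assms] tot_var_superadditive[OF assms] by (rule antisym)


lemma baI:
  assumes "fin_additive M \<nu>" "\<And>E. E \<notin> M \<Longrightarrow> \<nu> E = 0"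
    "\<And>P. finite P \<Longrightarrow> P \<subseteq> M \<Longrightarrow> disjoint P \<Longrightarrow> \<Union>P = \<Omega> \<Longrightarrow> (\<Sum>B\<in>P. \<bar>\<nu> B\<bar>) \<le> c"
  shows "\<nu> \<in> ba \<Omega> M"
  unfolding ba_def using assms by (auto simp: bdd_above_def partition_sums_def)

lemma ba_add:
  assumes mu: "\<mu> \<in> ba \<Omega> M" and nu: "\<nu> \<in> ba \<Omega> M"
  shows "(\<lambda>E. \<mu> E + \<nu> E) \<in> ba \<Omega> M"
proof (rule baI)
  show "fin_additive M (\<lambda>E. \<mu> E + \<nu> E)"
    using ba_fin_additive[OF mu] ba_fin_additive[OF nu] unfolding fin_additive_def by auto
  show "\<And>E. E \<notin> M \<Longrightarrow> \<mu> E + \<nu> E = 0" using ba_vanishes[OF mu] ba_vanishes[OF nu] by auto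
  fix P assume P: "finite P" "P \<subseteq> M" "disjoint P"
  have "(\<Sum>B\<in>P. \<bar>\<mu> B + \<nu> B\<bar>) \<le> (\<Sum>B\<in>P. \<bar>\<mu> B\<bar>) + (\<Sum>B\<in>P. \<bar>\<nu> B\<bar>)"
    by (simp add: sum.distrib[symmetric] sum_mono abs_triangle_ineq)
  also have "\<dots> \<le> tot_var M \<mu> \<Omega> + tot_var M \<nu> \<Omega>"
    using disjoint_sum_le_norm[OF mu P] disjoint_sum_le_norm[OF nu P] by simp
  finally show "(\<Sum>B\<in>P. \<bar>\<mu> B + \<nu> B\<bar>) \<le> tot_var M \<mu> \<Omega> + tot_var M \<nu> \<Omega>" .
qed

lemma sum_abs_cmult_le:
  assumes mu: "\<mu> \<in> ba \<Omega> M" and P: "finite P" "P \<subseteq> M" "disjoint P"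
  shows "(\<Sum>B\<in>P. \<bar>c * \<mu> B\<bar>) \<le> \<bar>c\<bar> * tot_var M \<mu> \<Omega>"
proof -
  have "(\<Sum>B\<in>P. \<bar>c * \<mu> B\<bar>) = \<bar>c\<bar> * (\<Sum>B\<in>P. \<bar>\<mu> B\<bar>)" by (simp add: abs_mult sum_distrib_left)
  also have "\<dots> \<le> \<bar>c\<bar> * tot_var M \<mu> \<Omega>"
    using disjoint_sum_le_norm[OF mu P] by (simp add: mult_left_mono)
  finally show ?thesis .
qed

lemma ba_cmult: assumes mu: "\<mu> \<in> ba \<Omega> M" shows "(\<lambda>E. c * \<mu> E) \<in> ba \<Omega> M"
proof (rule baI)
  show "fin_additive M (\<lambda>E. c * \<mu> E)"
    using ba_fin_additive[OF mu] unfolding fin_additive_def by (auto simp: algebra_simps)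
  show "\<And>E. E \<notin> M \<Longrightarrow> c * \<mu> E = 0" using ba_vanishes[OF mu] by auto
qed (rule sum_abs_cmult_le[OF mu])

lemma tot_var_cmult_le:
  "\<mu> \<in> ba \<Omega> M \<Longrightarrow> tot_var M (\<lambda>E. c * \<mu> E) \<Omega> \<le> \<bar>c\<bar> * tot_var M \<mu> \<Omega>"
  by (rule tot_var_least[OF top sum_abs_cmult_le])

lemma ba_diff: "\<mu> \<in> ba \<Omega> M \<Longrightarrow> \<nu> \<in> ba \<Omega> M \<Longrightarrow> (\<lambda>E. \<mu> E - \<nu> E) \<in> ba \<Omega> M"
  using ba_add[OF _ ba_cmult, of \<mu> \<nu> "-1"] by simp

lemma ba_zero: "(\<lambda>E. 0) \<in> ba \<Omega> M"
  by (rule baI[where c=0]) (auto simp: fin_additive_def)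

lemma ba_sum:
  "finite S \<Longrightarrow> (\<And>i. i \<in> S \<Longrightarrow> \<nu> i \<in> ba \<Omega> M) \<Longrightarrow> (\<lambda>E. \<Sum>i\<in>S. c i * \<nu> i E) \<in> ba \<Omega> M"
proof (induction S rule: finite_induct)
  case empty
  then show ?case using ba_zero by simp
next
  case (insert a S)
  then show ?case using ba_add[OF ba_cmult[of "\<nu> a" "c a"]] by simp
qed

lemma tot_var_zero: "tot_var M (\<lambda>E. 0) \<Omega> = 0"
  using tot_var_least[OF top, of "\<lambda>E. 0" 0] norm_nonneg_ba[OF ba_zero] by simp

lemma norm_eq_zero_ba:
  assumes mu: "\<mu> \<in> ba \<Omega> M" and z: "tot_var M \<mu> \<Omega> = 0"
  shows "\<mu> = (\<lambda>E. 0)"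
proof
  fix E show "\<mu> E = 0"
    using disjoint_sum_le_norm[OF mu, of "{E}"] z ba_vanishes[OF mu, of E] by (cases "E \<in> M") auto
qed

lemma nonneg_ba_nonneg: "nonneg_ba \<Omega> M m \<Longrightarrow> 0 \<le> m E"
  unfolding nonneg_ba_def using ba_vanishes[of m E] by (cases "E \<in> M") auto

lemma nonneg_ba_zero: "nonneg_ba \<Omega> M (\<lambda>E. 0)"
  unfolding nonneg_ba_def using ba_zero by auto

lemma nonneg_ba_add: "nonneg_ba \<Omega> M m \<Longrightarrow> nonneg_ba \<Omega> M m' \<Longrightarrow> nonneg_ba \<Omega> M (\<lambda>E. m E + m' E)"
  unfolding nonneg_ba_def using ba_add by auto

lemma nonneg_ba_cmult: "nonneg_ba \<Omega> M m \<Longrightarrow> 0 \<le> c \<Longrightarrow> nonneg_ba \<Omega> M (\<lambda>E. c * m E)"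
  unfolding nonneg_ba_def using ba_cmult by auto

lemma dominated_ba:
  assumes fa: "fin_additive M \<nu>" and z: "\<And>E. E \<notin> M \<Longrightarrow> \<nu> E = 0" and m: "nonneg_ba \<Omega> M m"
    and le: "\<And>E. E \<in> M \<Longrightarrow> \<bar>\<nu> E\<bar> \<le> m E"
  shows "\<nu> \<in> ba \<Omega> M" "tot_var M \<nu> \<Omega> \<le> m \<Omega>"
proof -
  have bound: "(\<Sum>B\<in>P. \<bar>\<nu> B\<bar>) \<le> m \<Omega>"
    if P: "finite P" "P \<subseteq> M" "disjoint P" "\<Union>P = \<Omega>" for P
  proof -
    have "(\<Sum>B\<in>P. \<bar>\<nu> B\<bar>) \<le> (\<Sum>B\<in>P. m B)" using le P by (intro sum_mono) auto
    also have "\<dots> = m \<Omega>"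
      using fin_additive_Union[OF ba_fin_additive P(1-3)] m P(4) unfolding nonneg_ba_def by simp
    finally show ?thesis .
  qed
  show "\<nu> \<in> ba \<Omega> M" by (rule baI[OF fa z bound])
  show "tot_var M \<nu> \<Omega> \<le> m \<Omega>" by (rule tot_var_least[OF top bound])
qed

lemma nonneg_ba_tv_measure:
  assumes mu: "\<mu> \<in> ba \<Omega> M"
  shows "nonneg_ba \<Omega> M (tv_measure M \<mu>)"
proof -
  have fa: "fin_additive M (tv_measure M \<mu>)"
    unfolding fin_additive_def tv_measure_def using tot_var_additive[OF mu] by auto
  have "tv_measure M \<mu> \<in> ba \<Omega> M"
  proof (rule baI[OF fa])
    fix P assume P: "finite P" "P \<subseteq> M" "disjoint P" "\<Union>P = \<Omega>"
    have "(\<Sum>B\<in>P. \<bar>tv_measure M \<mu> B\<bar>) = (\<Sum>B\<in>P. tv_measure M \<mu> B)"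
      using P tot_var_nonneg[OF mu] unfolding tv_measure_def by (intro sum.cong) auto
    also have "\<dots> = tv_measure M \<mu> \<Omega>" using fin_additive_Union[OF fa P(1-3)] P(4) by simp
    finally show "(\<Sum>B\<in>P. \<bar>tv_measure M \<mu> B\<bar>) \<le> tot_var M \<mu> \<Omega>"
      unfolding tv_measure_def using top by simp
  qed (simp add: tv_measure_def)
  then show ?thesis unfolding nonneg_ba_def tv_measure_def using tot_var_nonneg[OF mu] by auto
qed

lemma abs_le_tv_measure: "\<mu> \<in> ba \<Omega> M \<Longrightarrow> E \<in> M \<Longrightarrow> \<bar>\<mu> E\<bar> \<le> tv_measure M \<mu> E"
  unfolding tv_measure_def using abs_le_tot_var by auto

lemma simple_fun_abs_finite: "simple_fun \<Omega> M f \<Longrightarrow> finite ((\<lambda>x. \<bar>f x\<bar>) ` \<Omega>)"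
  using finite_imageI[of "f ` \<Omega>" abs] unfolding simple_fun_def by (simp add: image_image)

lemma sup_norm_ge: "simple_fun \<Omega> M f \<Longrightarrow> x \<in> \<Omega> \<Longrightarrow> \<bar>f x\<bar> \<le> sup_norm \<Omega> f"
  unfolding sup_norm_def by (intro cSup_upper) (auto dest: simple_fun_abs_finite)

lemma sup_norm_nonneg: "simple_fun \<Omega> M f \<Longrightarrow> 0 \<le> sup_norm \<Omega> f"
  unfolding sup_norm_def by (intro cSup_upper) (auto dest: simple_fun_abs_finite)

lemma sup_norm_le: "0 \<le> K \<Longrightarrow> (\<And>x. x \<in> \<Omega> \<Longrightarrow> \<bar>f x\<bar> \<le> K) \<Longrightarrow> sup_norm \<Omega> f \<le> K"
  unfolding sup_norm_def by (intro cSup_least) auto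

lemma fa_integral_bound:
  assumes nu: "\<nu> \<in> ba \<Omega> M" and f: "simple_fun \<Omega> M f"
  shows "\<bar>fa_integral \<Omega> \<nu> f\<bar> \<le> sup_norm \<Omega> f * tot_var M \<nu> \<Omega>"
proof -
  let ?P = "level_partition \<Omega> f"
  note P = simple_fun_level_partition[OF f]
  have "\<bar>fa_integral \<Omega> \<nu> f\<bar> = \<bar>\<Sum>D\<in>?P. f (block_point D) * \<nu> D\<bar>"
    using fa_integral_partition[OF ba_fin_additive[OF nu] P] by simp
  also have "\<dots> \<le> (\<Sum>D\<in>?P. \<bar>f (block_point D) * \<nu> D\<bar>)" by (rule sum_abs)
  also have "\<dots> \<le> (\<Sum>D\<in>?P. sup_norm \<Omega> f * \<bar>\<nu> D\<bar>)"
  proof (rule sum_mono)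
    fix D assume D: "D \<in> ?P"
    show "\<bar>f (block_point D) * \<nu> D\<bar> \<le> sup_norm \<Omega> f * \<bar>\<nu> D\<bar>"
    proof (cases "D = {}")
      case True
      then show ?thesis using fin_additive_empty[OF ba_fin_additive[OF nu]] by simp
    next
      case False
      then have "block_point D \<in> \<Omega>"
        using block_point_in[OF False] partition_block_subset[OF P(1) D] by auto
      then show ?thesis using sup_norm_ge[OF f] by (simp add: abs_mult mult_right_mono)
    qed
  qed
  also have "\<dots> = sup_norm \<Omega> f * (\<Sum>D\<in>?P. \<bar>\<nu> D\<bar>)" by (simp add: sum_distrib_left)
  also have "\<dots> \<le> sup_norm \<Omega> f * tot_var M \<nu> \<Omega>"
    using P(1) disjoint_sum_le_norm[OF nu] sup_norm_nonneg[OF f] unfolding is_partition_def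
    by (simp add: mult_left_mono)
  finally show ?thesis .
qed

end

section \<open>Densities and partition quotients\<close>

definition density :: "'a set \<Rightarrow> 'a set set \<Rightarrow> ('a set \<Rightarrow> real) \<Rightarrow> ('a \<Rightarrow> real) \<Rightarrow> 'a set \<Rightarrow> real" where
  "density \<Omega> A m h = (\<lambda>E. if E \<in> A then fa_integral \<Omega> m (\<lambda>x. indicator E x * h x) else 0)"

text \<open>For finer and finer P these approximate a Radon-Nikodym derivative.\<close>
definition partition_quotient :: "('a set \<Rightarrow> real) \<Rightarrow> ('a set \<Rightarrow> real) \<Rightarrow> 'a set set \<Rightarrow> 'a \<Rightarrow> real" where
  "partition_quotient \<psi> m P = (\<lambda>x. \<Sum>B\<in>P. \<psi> B / m B * indicator B x)"

context algebra
begin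

lemma density_cong: "(\<And>x. x \<in> \<Omega> \<Longrightarrow> h x = h' x) \<Longrightarrow> density \<Omega> M m h = density \<Omega> M m h'"
  unfolding density_def by (intro ext) (auto intro!: fa_integral_cong)

lemma density_block:
  assumes fm: "fin_additive M m" and P: "is_partition \<Omega> M P" and h: "blockwise_const P h" and D: "D \<in> P"
  shows "density \<Omega> M m h D = h (block_point D) * m D"
proof -
  have DM: "D \<in> M" using partition_block_sets[OF P D] .
  have "fa_integral \<Omega> m (\<lambda>x. indicator D x * h x) = fa_integral \<Omega> m (\<lambda>x. h (block_point D) * indicator D x)"
    using blockwise_const_val[OF h D] by (intro fa_integral_cong) (auto simp: indicator_def)
  also have "\<dots> = h (block_point D) * m D"
    using fa_integral_cmult[OF fm simple_fun_indicator[OF DM]] fa_integral_indicator[OF fm DM] by simp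
  finally show ?thesis unfolding density_def using DM by simp
qed

lemma density_indicator:
  assumes fm: "fin_additive M m" and B: "B \<in> M" and E: "E \<in> M"
  shows "density \<Omega> M m (indicator B) E = m (E \<inter> B)"
proof -
  have "fa_integral \<Omega> m (\<lambda>x. indicator E x * indicator B x) = fa_integral \<Omega> m (indicator (E \<inter> B))"
    by (intro fa_integral_cong) (simp add: indicator_def)
  also have "\<dots> = m (E \<inter> B)" using fa_integral_indicator[OF fm Int[OF E B]] .
  finally show ?thesis unfolding density_def using E by simp
qed

lemma density_sum:
  assumes fm: "fin_additive M m" and S: "finite S" and h: "\<And>i. i \<in> S \<Longrightarrow> simple_fun \<Omega> M (h i)"
  shows "density \<Omega> M m (\<lambda>x. \<Sum>i\<in>S. c i * h i x) = (\<lambda>E. \<Sum>i\<in>S. c i * density \<Omega> M m (h i) E)"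
proof
  fix E
  show "density \<Omega> M m (\<lambda>x. \<Sum>i\<in>S. c i * h i x) E = (\<Sum>i\<in>S. c i * density \<Omega> M m (h i) E)"
  proof (cases "E \<in> M")
    case False
    then show ?thesis unfolding density_def by simp
  next
    case E: True
    have hE: "simple_fun \<Omega> M (\<lambda>x. indicator E x * h i x)" if "i \<in> S" for i
      using simple_fun_comb[OF simple_fun_indicator[OF E] h[OF that]] .
    have chE: "simple_fun \<Omega> M (\<lambda>x. c i * (indicator E x * h i x))" if "i \<in> S" for i
      using simple_fun_comb1[OF hE[OF that]] .
    have "fa_integral \<Omega> m (\<lambda>x. indicator E x * (\<Sum>i\<in>S. c i * h i x))
        = fa_integral \<Omega> m (\<lambda>x. \<Sum>i\<in>S. c i * (indicator E x * h i x))"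
      by (simp add: sum_distrib_left algebra_simps)
    also have "\<dots> = (\<Sum>i\<in>S. fa_integral \<Omega> m (\<lambda>x. c i * (indicator E x * h i x)))"
      by (rule fa_integral_sum[OF fm S chE])
    also have "\<dots> = (\<Sum>i\<in>S. c i * fa_integral \<Omega> m (\<lambda>x. indicator E x * h i x))"
      using fa_integral_cmult[OF fm hE] by simp
    finally show ?thesis unfolding density_def using E by simp
  qed
qed

lemma density_add:
  assumes fm: "fin_additive M m" and h1: "simple_fun \<Omega> M h1" and h2: "simple_fun \<Omega> M h2"
  shows "density \<Omega> M m (\<lambda>x. h1 x + h2 x) = (\<lambda>E. density \<Omega> M m h1 E + density \<Omega> M m h2 E)"
proof
  fix E
  show "density \<Omega> M m (\<lambda>x. h1 x + h2 x) E = density \<Omega> M m h1 E + density \<Omega> M m h2 E"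
  proof (cases "E \<in> M")
    case False
    then show ?thesis unfolding density_def by simp
  next
    case E: True
    have "fa_integral \<Omega> m (\<lambda>x. indicator E x * (h1 x + h2 x))
        = fa_integral \<Omega> m (\<lambda>x. indicator E x * h1 x + indicator E x * h2 x)"
      by (simp add: algebra_simps)
    also have "\<dots> = fa_integral \<Omega> m (\<lambda>x. indicator E x * h1 x) + fa_integral \<Omega> m (\<lambda>x. indicator E x * h2 x)"
      by (rule fa_integral_add[OF fm simple_fun_comb[OF simple_fun_indicator[OF E] h1]
            simple_fun_comb[OF simple_fun_indicator[OF E] h2]])
    finally show ?thesis unfolding density_def using E by simp
  qed
qed

lemma density_fin_additive:
  assumes fm: "fin_additive M m" and h: "simple_fun \<Omega> M h"
  shows "fin_additive M (density \<Omega> M m h)"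
  unfolding fin_additive_def
proof (intro ballI impI)
  fix E F assume E: "E \<in> M" and F: "F \<in> M" and EF: "E \<inter> F = {}"
  have "fa_integral \<Omega> m (\<lambda>x. indicator (E \<union> F) x * h x)
      = fa_integral \<Omega> m (\<lambda>x. indicator E x * h x + indicator F x * h x)"
    using EF by (intro fa_integral_cong) (auto simp: indicator_def)
  also have "\<dots> = fa_integral \<Omega> m (\<lambda>x. indicator E x * h x) + fa_integral \<Omega> m (\<lambda>x. indicator F x * h x)"
    by (rule fa_integral_add[OF fm simple_fun_comb[OF simple_fun_indicator[OF E] h]
          simple_fun_comb[OF simple_fun_indicator[OF F] h]])
  finally show "density \<Omega> M m h (E \<union> F) = density \<Omega> M m h E + density \<Omega> M m h F"
    unfolding density_def using E F by auto
qed

lemma density_abs_le: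
  assumes m: "nonneg_ba \<Omega> M m" and h: "simple_fun \<Omega> M h" and hC: "\<And>x. x \<in> \<Omega> \<Longrightarrow> \<bar>h x\<bar> \<le> C"
    and E: "E \<in> M"
  shows "\<bar>density \<Omega> M m h E\<bar> \<le> C * m E"
proof -
  have fm: "fin_additive M m" and pos: "\<And>E. E \<in> M \<Longrightarrow> 0 \<le> m E"
    using m ba_fin_additive unfolding nonneg_ba_def by auto
  note sE = simple_fun_indicator[OF E]
  have "\<bar>fa_integral \<Omega> m (\<lambda>x. indicator E x * h x)\<bar> \<le> fa_integral \<Omega> m (\<lambda>x. \<bar>indicator E x * h x\<bar>)"
    by (rule fa_integral_abs_le[OF fm pos simple_fun_comb[OF sE h]])
  also have "\<dots> \<le> fa_integral \<Omega> m (\<lambda>x. C * indicator E x)"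
  proof (rule fa_integral_mono[OF fm pos])
    show "simple_fun \<Omega> M (\<lambda>x. \<bar>indicator E x * h x\<bar>)"
      using simple_fun_comb[OF sE h] .
    show "simple_fun \<Omega> M (\<lambda>x. C * indicator E x)" using simple_fun_comb1[OF sE] .
    show "\<bar>indicator E x * h x\<bar> \<le> C * indicator E x" if "x \<in> \<Omega>" for x
      using hC[OF that] by (simp add: indicator_def)
  qed
  also have "\<dots> = C * m E"
    using fa_integral_cmult[OF fm sE] fa_integral_indicator[OF fm E] by simp
  finally show ?thesis unfolding density_def using E by simp
qed

lemma density_ba:
  assumes m: "nonneg_ba \<Omega> M m" and h: "simple_fun \<Omega> M h" and hC: "\<And>x. x \<in> \<Omega> \<Longrightarrow> \<bar>h x\<bar> \<le> C"
    and C: "0 \<le> C"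
  shows "density \<Omega> M m h \<in> ba \<Omega> M" "tot_var M (density \<Omega> M m h) \<Omega> \<le> C * m \<Omega>"
  using dominated_ba[OF density_fin_additive _ nonneg_ba_cmult[OF m C] density_abs_le[OF m h hC]]
    m h unfolding nonneg_ba_def by (auto simp: density_def ba_fin_additive)

lemma fa_integral_density:
  assumes fm: "fin_additive M m" and h: "simple_fun \<Omega> M h" and g: "simple_fun \<Omega> M g"
  shows "fa_integral \<Omega> (density \<Omega> M m h) g = fa_integral \<Omega> m (\<lambda>x. g x * h x)"
proof -
  obtain P where P: "is_partition \<Omega> M P" "blockwise_const P g" "blockwise_const P h"
    using simple_fun_common_partition[OF g h] .
  have gh: "blockwise_const P (\<lambda>x. g x * h x)" using blockwise_const_comb[OF P(2,3), of "(*)"] .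
  show ?thesis
    using fa_integral_partition[OF density_fin_additive[OF fm h] P(1,2)]
      fa_integral_partition[OF fm P(1) gh] density_block[OF fm P(1,3)]
    by (simp add: mult.assoc)
qed

lemma density_indicator_nonneg:
  assumes m: "nonneg_ba \<Omega> M m" and E: "E \<in> M"
  shows "nonneg_ba \<Omega> M (density \<Omega> M m (indicator E))" "density \<Omega> M m (indicator E) \<Omega> = m E"
proof -
  have fm: "fin_additive M m" using m ba_fin_additive unfolding nonneg_ba_def by auto
  have "density \<Omega> M m (indicator E) \<in> ba \<Omega> M"
    using density_ba(1)[OF m simple_fun_indicator[OF E], of 1] by (simp add: indicator_def)
  moreover have "\<forall>X\<in>M. 0 \<le> density \<Omega> M m (indicator E) X"
    using density_indicator[OF fm E] m Int[OF _ E] unfolding nonneg_ba_def by auto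
  ultimately show "nonneg_ba \<Omega> M (density \<Omega> M m (indicator E))" unfolding nonneg_ba_def by auto
  show "density \<Omega> M m (indicator E) \<Omega> = m E"
    using density_indicator[OF fm E top] sets_into_space E by (simp add: Int_absorb1)
qed

lemma partition_quotient_val:
  "is_partition \<Omega> M P \<Longrightarrow> B \<in> P \<Longrightarrow> x \<in> B \<Longrightarrow> partition_quotient \<psi> m P x = \<psi> B / m B"
  unfolding partition_quotient_def by (rule partition_sum_indicator)

lemma partition_quotient_blockwise_const:
  assumes P: "is_partition \<Omega> M P"
  shows "blockwise_const P (partition_quotient \<psi> m P)"
  unfolding blockwise_const_def using partition_quotient_val[OF P] by simp

lemma partition_quotient_simple_fun:
  "is_partition \<Omega> M P \<Longrightarrow> simple_fun \<Omega> M (partition_quotient \<psi> m P)"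
  by (rule blockwise_const_simple_fun[OF _ partition_quotient_blockwise_const])

lemma partition_quotient_bound:
  assumes P: "is_partition \<Omega> M P" and C: "0 \<le> C" and pos: "\<And>E. E \<in> M \<Longrightarrow> 0 \<le> m E"
    and le: "\<And>E. E \<in> M \<Longrightarrow> \<bar>\<psi> E\<bar> \<le> C * m E" and x: "x \<in> \<Omega>"
  shows "\<bar>partition_quotient \<psi> m P x\<bar> \<le> C"
proof -
  obtain B where B: "B \<in> P" "x \<in> B" using partition_cover[OF P x] by auto
  have BM: "B \<in> M" using partition_block_sets[OF P B(1)] .
  have "\<bar>\<psi> B / m B\<bar> \<le> C"
  proof (cases "m B = 0")
    case True
    then show ?thesis using C by simp
  next
    case False
    then have "0 < m B" using pos[OF BM] by simp
    then show ?thesis using le[OF BM] by (simp add: pos_divide_le_eq mult.commute)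
  qed
  then show ?thesis using partition_quotient_val[OF P B] by simp
qed

text \<open>The defining property of the quotient: for g blockwise constant on Q,
  \<open>\<integral> g (d\<psi>/dm)\<^sub>Q dm = \<integral> g d\<psi>\<close>, provided \<psi> vanishes where m does.\<close>
lemma fa_integral_partition_quotient:
  assumes fm: "fin_additive M m" and f\<psi>: "fin_additive M \<psi>"
    and le: "\<And>E. E \<in> M \<Longrightarrow> \<bar>\<psi> E\<bar> \<le> C * m E"
    and Q: "is_partition \<Omega> M Q" and g: "blockwise_const Q g"
  shows "fa_integral \<Omega> m (\<lambda>x. g x * partition_quotient \<psi> m Q x) = fa_integral \<Omega> \<psi> g"
proof -
  let ?k = "partition_quotient \<psi> m Q"
  have gk: "blockwise_const Q (\<lambda>x. g x * ?k x)"
    using blockwise_const_comb[OF g partition_quotient_blockwise_const[OF Q], of "(*)"] .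
  have "g (block_point D) * ?k (block_point D) * m D = g (block_point D) * \<psi> D" if D: "D \<in> Q" for D
  proof (cases "D = {}")
    case True
    then show ?thesis using fin_additive_empty[OF fm] fin_additive_empty[OF f\<psi>] by simp
  next
    case False
    have "?k (block_point D) = \<psi> D / m D"
      using partition_quotient_val[OF Q D block_point_in[OF False]] .
    moreover have "m D = 0 \<Longrightarrow> \<psi> D = 0" using le[OF partition_block_sets[OF Q D]] by simp
    ultimately show ?thesis by (cases "m D = 0") auto
  qed
  then show ?thesis
    unfolding fa_integral_partition[OF fm Q gk] fa_integral_partition[OF f\<psi> Q g] by (rule sum.cong[OF refl])
qed

end

section \<open>Convergence of partition quotients in \<open>L\<^sup>1(m)\<close>\<close>

lemma abs_le_quadratic:
  fixes d t :: real
  assumes t: "0 < t"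
  shows "\<bar>d\<bar> \<le> t + (1 / t) * (d * d)"
proof -
  have "t * \<bar>d\<bar> \<le> t * t + d * d"
  proof (cases "\<bar>d\<bar> \<le> t")
    case True
    then have "t * \<bar>d\<bar> \<le> t * t" using t by (simp add: mult_left_mono)
    then show ?thesis by (simp add: add_increasing2)
  next
    case False
    then have "t * \<bar>d\<bar> \<le> \<bar>d\<bar> * \<bar>d\<bar>" by (intro mult_right_mono) auto
    then show ?thesis by (simp add: add_increasing)
  qed
  then show ?thesis using t by (simp add: field_simps)
qed

context algebra
begin

lemma fa_integral_abs_le_quadratic:
  assumes m: "nonneg_ba \<Omega> M m" and u: "simple_fun \<Omega> M u" and t: "0 < t"
  shows "fa_integral \<Omega> m (\<lambda>x. \<bar>u x\<bar>) \<le> t * m \<Omega> + (1 / t) * fa_integral \<Omega> m (\<lambda>x. u x * u x)"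
proof -
  have fm: "fin_additive M m" and pos: "\<And>E. E \<in> M \<Longrightarrow> 0 \<le> m E"
    using m ba_fin_additive unfolding nonneg_ba_def by auto
  have uu: "simple_fun \<Omega> M (\<lambda>x. u x * u x)" using simple_fun_comb[OF u u] .
  have uu': "simple_fun \<Omega> M (\<lambda>x. (1 / t) * (u x * u x))" using simple_fun_comb1[OF uu] .
  have "fa_integral \<Omega> m (\<lambda>x. \<bar>u x\<bar>) \<le> fa_integral \<Omega> m (\<lambda>x. t + (1 / t) * (u x * u x))"
    using abs_le_quadratic[OF t]
    by (intro fa_integral_mono[OF fm pos simple_fun_comb1[OF u] simple_fun_comb1[OF uu']])
  also have "\<dots> = fa_integral \<Omega> m (\<lambda>x. t) + fa_integral \<Omega> m (\<lambda>x. (1 / t) * (u x * u x))"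
    by (rule fa_integral_add[OF fm simple_fun_const uu'])
  also have "\<dots> = t * m \<Omega> + (1 / t) * fa_integral \<Omega> m (\<lambda>x. u x * u x)"
    by (simp only: fa_integral_const[OF fm] fa_integral_cmult[OF fm uu])
  finally show ?thesis .
qed

text \<open>For \<psi> dominated by \<open>C m\<close> the partition quotients are bounded by C, so their energy
  \<open>\<integral>k\<^sub>P\<^sup>2 dm\<close> is at most \<open>C\<^sup>2 m(\<Omega>)\<close>; along refinement energy is additive (the quotients form a
  martingale), as the Pythagoras identity below shows.\<close>
lemma partition_quotient_energy_bound:
  assumes m: "nonneg_ba \<Omega> M m" and C: "0 \<le> C" and le: "\<And>E. E \<in> M \<Longrightarrow> \<bar>\<psi> E\<bar> \<le> C * m E"
    and P: "is_partition \<Omega> M P"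
  shows "fa_integral \<Omega> m (\<lambda>x. partition_quotient \<psi> m P x * partition_quotient \<psi> m P x) \<le> C * C * m \<Omega>"
proof -
  let ?k = "partition_quotient \<psi> m P"
  have fm: "fin_additive M m" and pos: "\<And>E. E \<in> M \<Longrightarrow> 0 \<le> m E"
    using m ba_fin_additive unfolding nonneg_ba_def by auto
  have sk: "simple_fun \<Omega> M ?k" by (rule partition_quotient_simple_fun[OF P])
  have "?k x * ?k x \<le> C * C" if "x \<in> \<Omega>" for x
  proof -
    have "\<bar>?k x\<bar> * \<bar>?k x\<bar> \<le> C * C"
      using partition_quotient_bound[OF P C pos le that] C by (intro mult_mono) auto
    then show ?thesis by simp
  qed
  then have "fa_integral \<Omega> m (\<lambda>x. ?k x * ?k x) \<le> fa_integral \<Omega> m (\<lambda>x. C * C)"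
    by (intro fa_integral_mono[OF fm pos simple_fun_comb[OF sk sk] simple_fun_const])
  then show ?thesis using fa_integral_const[OF fm] by simp
qed

lemma partition_quotient_pythagoras:
  assumes m: "nonneg_ba \<Omega> M m" and f\<psi>: "fin_additive M \<psi>" and le: "\<And>E. E \<in> M \<Longrightarrow> \<bar>\<psi> E\<bar> \<le> C * m E"
    and P: "is_partition \<Omega> M P" and Q: "is_partition \<Omega> M Q" and QP: "finer Q P"
  defines "kP \<equiv> partition_quotient \<psi> m P" and "kQ \<equiv> partition_quotient \<psi> m Q"
  shows "fa_integral \<Omega> m (\<lambda>x. (kQ x - kP x) * (kQ x - kP x))
    = fa_integral \<Omega> m (\<lambda>x. kQ x * kQ x) - fa_integral \<Omega> m (\<lambda>x. kP x * kP x)"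
proof -
  have fm: "fin_additive M m" using m ba_fin_additive unfolding nonneg_ba_def by auto
  have sP: "simple_fun \<Omega> M kP" and sQ: "simple_fun \<Omega> M kQ"
    unfolding kP_def kQ_def using partition_quotient_simple_fun P Q by auto
  have cP: "blockwise_const P kP" unfolding kP_def by (rule partition_quotient_blockwise_const[OF P])
  have cross: "fa_integral \<Omega> m (\<lambda>x. kP x * kQ x) = fa_integral \<Omega> m (\<lambda>x. kP x * kP x)"
    using fa_integral_partition_quotient[OF fm f\<psi> le Q blockwise_const_finer[OF cP QP]]
      fa_integral_partition_quotient[OF fm f\<psi> le P cP]
    unfolding kP_def kQ_def by simp
  have sPP: "simple_fun \<Omega> M (\<lambda>x. kP x * kP x)" and sQQ: "simple_fun \<Omega> M (\<lambda>x. kQ x * kQ x)"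
    and sPQ: "simple_fun \<Omega> M (\<lambda>x. kP x * kQ x)"
    using simple_fun_comb[OF sP sP] simple_fun_comb[OF sQ sQ] simple_fun_comb[OF sP sQ] by auto
  have s2PQ: "simple_fun \<Omega> M (\<lambda>x. 2 * (kP x * kQ x))" using simple_fun_comb1[OF sPQ] .
  have "fa_integral \<Omega> m (\<lambda>x. (kQ x - kP x) * (kQ x - kP x))
      = fa_integral \<Omega> m (\<lambda>x. (kQ x * kQ x - 2 * (kP x * kQ x)) + kP x * kP x)"
    by (rule fa_integral_cong) (simp add: algebra_simps)
  also have "\<dots> = fa_integral \<Omega> m (\<lambda>x. kQ x * kQ x) - 2 * fa_integral \<Omega> m (\<lambda>x. kP x * kQ x)
      + fa_integral \<Omega> m (\<lambda>x. kP x * kP x)"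
    using fa_integral_add[OF fm simple_fun_comb[OF sQQ s2PQ] sPP] fa_integral_diff[OF fm sQQ s2PQ]
      fa_integral_cmult[OF fm sPQ] by simp
  finally show ?thesis unfolding cross by simp
qed

text \<open>Choose P whose energy is
  within \<delta> of the supremum; for every Q finer than P, Pythagoras bounds \<open>\<integral>(k\<^sub>Q-k\<^sub>P)\<^sup>2\<close> by \<delta>.\<close>
lemma partition_quotient_cauchy:
  assumes m: "nonneg_ba \<Omega> M m" and f\<psi>: "fin_additive M \<psi>" and C: "0 \<le> C"
    and le: "\<And>E. E \<in> M \<Longrightarrow> \<bar>\<psi> E\<bar> \<le> C * m E" and \<eta>: "0 < \<eta>"
  shows "\<exists>P. is_partition \<Omega> M P \<and> (\<forall>Q. is_partition \<Omega> M Q \<and> finer Q P \<longrightarrow>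
       fa_integral \<Omega> m (\<lambda>x. \<bar>partition_quotient \<psi> m Q x - partition_quotient \<psi> m P x\<bar>) \<le> \<eta>)"
proof -
  define energy where "energy P = fa_integral \<Omega> m (\<lambda>x. partition_quotient \<psi> m P x * partition_quotient \<psi> m P x)" for P
  define energies where "energies = energy ` {P. is_partition \<Omega> M P}"
  have bdd: "bdd_above energies"
    unfolding energies_def energy_def using partition_quotient_energy_bound[OF m C le]
    by (auto simp: bdd_above_def)
  have "m \<Omega> \<ge> 0" using m top unfolding nonneg_ba_def by auto
  define t where "t = \<eta> / (2 * (m \<Omega> + 1))"
  have t: "0 < t" "t * m \<Omega> \<le> \<eta> / 2"
    unfolding t_def using \<eta> \<open>m \<Omega> \<ge> 0\<close> by (auto simp: field_simps)
  define \<delta> where "\<delta> = t * \<eta> / 2"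
  have "Sup energies - \<delta> < Sup energies" unfolding \<delta>_def using t \<eta> by simp
  then obtain P where P: "is_partition \<Omega> M P" and close: "Sup energies - \<delta> < energy P"
    using less_cSupE[of "Sup energies - \<delta>" energies] partition_trivial unfolding energies_def by blast
  show ?thesis
  proof (intro exI[of _ P] conjI allI impI)
    show "is_partition \<Omega> M P" by (rule P)
    fix Q assume "is_partition \<Omega> M Q \<and> finer Q P"
    then have Q: "is_partition \<Omega> M Q" and QP: "finer Q P" by auto
    let ?d = "\<lambda>x. partition_quotient \<psi> m Q x - partition_quotient \<psi> m P x"
    have "energy Q \<le> Sup energies" using bdd Q unfolding energies_def by (intro cSup_upper) auto
    then have "fa_integral \<Omega> m (\<lambda>x. ?d x * ?d x) \<le> \<delta>"
      using partition_quotient_pythagoras[OF m f\<psi> le P Q QP] close unfolding energy_def by simp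
    moreover have "simple_fun \<Omega> M ?d"
      using simple_fun_comb[OF partition_quotient_simple_fun[OF Q] partition_quotient_simple_fun[OF P]] .
    ultimately have "fa_integral \<Omega> m (\<lambda>x. \<bar>?d x\<bar>) \<le> t * m \<Omega> + (1 / t) * \<delta>"
      using fa_integral_abs_le_quadratic[OF m _ t(1), of ?d] t(1)
      by (smt (verit) divide_pos_pos mult_left_mono)
    also have "\<dots> \<le> \<eta>" using t unfolding \<delta>_def by simp
    finally show "fa_integral \<Omega> m (\<lambda>x. \<bar>?d x\<bar>) \<le> \<eta>" .
  qed
qed

end

section \<open>Approximating a bounded functional by integrals of simple functions\<close>

definition restricted_functional :: "'a set \<Rightarrow> 'a set set \<Rightarrow> (('a set \<Rightarrow> real) \<Rightarrow> real)
    \<Rightarrow> ('a set \<Rightarrow> real) \<Rightarrow> 'a set \<Rightarrow> real" where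
  "restricted_functional \<Omega> A \<phi> m = (\<lambda>E. if E \<in> A then \<phi> (density \<Omega> A m (indicator E)) else 0)"

context algebra
begin

lemma linear_add: "linear_on_ba \<Omega> M \<phi> \<Longrightarrow> \<mu> \<in> ba \<Omega> M \<Longrightarrow> \<nu> \<in> ba \<Omega> M \<Longrightarrow> \<phi> (\<lambda>E. \<mu> E + \<nu> E) = \<phi> \<mu> + \<phi> \<nu>"
  unfolding linear_on_ba_def by auto

lemma linear_cmult: "linear_on_ba \<Omega> M \<phi> \<Longrightarrow> \<mu> \<in> ba \<Omega> M \<Longrightarrow> \<phi> (\<lambda>E. c * \<mu> E) = c * \<phi> \<mu>"
  unfolding linear_on_ba_def by auto

lemma linear_zero: "linear_on_ba \<Omega> M \<phi> \<Longrightarrow> \<phi> (\<lambda>E. 0) = 0"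
  using linear_cmult[OF _ ba_zero, of \<phi> 0] by simp

lemma linear_diff:
  assumes lin: "linear_on_ba \<Omega> M \<phi>" and mu: "\<mu> \<in> ba \<Omega> M" and nu: "\<nu> \<in> ba \<Omega> M"
  shows "\<phi> (\<lambda>E. \<mu> E - \<nu> E) = \<phi> \<mu> - \<phi> \<nu>"
  using linear_add[OF lin ba_diff[OF mu nu] nu] by simp

lemma linear_sum:
  assumes lin: "linear_on_ba \<Omega> M \<phi>"
  shows "finite S \<Longrightarrow> (\<And>i. i \<in> S \<Longrightarrow> \<nu> i \<in> ba \<Omega> M) \<Longrightarrow>
    \<phi> (\<lambda>E. \<Sum>i\<in>S. c i * \<nu> i E) = (\<Sum>i\<in>S. c i * \<phi> (\<nu> i))"
proof (induction S rule: finite_induct)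
  case empty
  then show ?case using linear_zero[OF lin] by simp
next
  case (insert a S)
  then show ?case
    using linear_add[OF lin ba_cmult[of "\<nu> a" "c a"] ba_sum[of S \<nu> c]] linear_cmult[OF lin, of "\<nu> a"]
    by simp
qed

lemma restricted_functional_fin_additive:
  assumes lin: "linear_on_ba \<Omega> M \<phi>" and m: "nonneg_ba \<Omega> M m"
  shows "fin_additive M (restricted_functional \<Omega> M \<phi> m)"
  unfolding fin_additive_def
proof (intro ballI impI)
  have fm: "fin_additive M m" using m ba_fin_additive unfolding nonneg_ba_def by auto
  fix E F assume E: "E \<in> M" and F: "F \<in> M" and EF: "E \<inter> F = {}"
  have "density \<Omega> M m (indicator (E \<union> F)) = density \<Omega> M m (\<lambda>x. indicator E x + indicator F x)"
    using EF by (intro density_cong) (auto simp: indicator_def)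
  also have "\<dots> = (\<lambda>X. density \<Omega> M m (indicator E) X + density \<Omega> M m (indicator F) X)"
    by (rule density_add[OF fm simple_fun_indicator[OF E] simple_fun_indicator[OF F]])
  finally show "restricted_functional \<Omega> M \<phi> m (E \<union> F) = restricted_functional \<Omega> M \<phi> m E + restricted_functional \<Omega> M \<phi> m F"
    using linear_add[OF lin] density_indicator_nonneg(1)[OF m E] density_indicator_nonneg(1)[OF m F] E F
    unfolding restricted_functional_def nonneg_ba_def by auto
qed

lemma restricted_functional_bound:
  assumes bound: "\<And>\<nu>. \<nu> \<in> ba \<Omega> M \<Longrightarrow> \<bar>\<phi> \<nu>\<bar> \<le> K * tot_var M \<nu> \<Omega>" and K: "0 \<le> K"
    and m: "nonneg_ba \<Omega> M m" and E: "E \<in> M"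
  shows "\<bar>restricted_functional \<Omega> M \<phi> m E\<bar> \<le> K * m E"
proof -
  let ?\<nu> = "density \<Omega> M m (indicator E)"
  note \<nu> = density_indicator_nonneg[OF m E]
  have "tot_var M ?\<nu> \<Omega> \<le> m E"
    using dominated_ba(2)[OF _ _ \<nu>(1)] \<nu> unfolding nonneg_ba_def
    by (auto simp: ba_fin_additive ba_vanishes)
  then have "\<bar>\<phi> ?\<nu>\<bar> \<le> K * m E"
    using bound[of ?\<nu>] \<nu>(1) K unfolding nonneg_ba_def by (meson mult_left_mono order_trans)
  then show ?thesis unfolding restricted_functional_def using E by simp
qed

lemma functional_density:
  assumes lin: "linear_on_ba \<Omega> M \<phi>" and m: "nonneg_ba \<Omega> M m" and g: "simple_fun \<Omega> M g"
  shows "\<phi> (density \<Omega> M m g) = fa_integral \<Omega> (restricted_functional \<Omega> M \<phi> m) g"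
proof -
  have fm: "fin_additive M m" using m ba_fin_additive unfolding nonneg_ba_def by auto
  let ?P = "level_partition \<Omega> g"
  note P = simple_fun_level_partition[OF g]
  have fP: "finite ?P" and PM: "\<And>D. D \<in> ?P \<Longrightarrow> D \<in> M"
    using P(1) partition_block_sets unfolding is_partition_def by auto
  have "density \<Omega> M m g = density \<Omega> M m (\<lambda>x. \<Sum>D\<in>?P. g (block_point D) * indicator D x)"
  proof (rule density_cong)
    fix x assume "x \<in> \<Omega>"
    then obtain D where "D \<in> ?P" "x \<in> D" using partition_cover[OF P(1)] by auto
    then show "g x = (\<Sum>D\<in>?P. g (block_point D) * indicator D x)"
      using partition_sum_indicator[OF P(1)] blockwise_const_val[OF P(2)] by simp
  qed
  also have "\<dots> = (\<lambda>E. \<Sum>D\<in>?P. g (block_point D) * density \<Omega> M m (indicator D) E)"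
    using density_sum[OF fm fP, of indicator] simple_fun_indicator PM by auto
  finally have "\<phi> (density \<Omega> M m g) = (\<Sum>D\<in>?P. g (block_point D) * \<phi> (density \<Omega> M m (indicator D)))"
    using linear_sum[OF lin fP, of "\<lambda>D. density \<Omega> M m (indicator D)"]
      density_indicator_nonneg(1)[OF m PM] unfolding nonneg_ba_def by auto
  also have "\<dots> = (\<Sum>D\<in>?P. g (block_point D) * restricted_functional \<Omega> M \<phi> m D)"
    unfolding restricted_functional_def using PM by simp
  also have "\<dots> = fa_integral \<Omega> (restricted_functional \<Omega> M \<phi> m) g"
    using fa_integral_partition[OF restricted_functional_fin_additive[OF lin m] P] by simp
  finally show ?thesis .
qed


lemma functional_density_error:
  assumes lin: "linear_on_ba \<Omega> M \<phi>" and m: "nonneg_ba \<Omega> M m"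
    and bound: "\<And>E. E \<in> M \<Longrightarrow> \<bar>restricted_functional \<Omega> M \<phi> m E\<bar> \<le> K * m E"
    and Q: "is_partition \<Omega> M Q" and h: "blockwise_const Q h" and h1: "\<And>x. x \<in> \<Omega> \<Longrightarrow> \<bar>h x\<bar> \<le> 1"
    and f: "simple_fun \<Omega> M f"
  defines "k \<equiv> partition_quotient (restricted_functional \<Omega> M \<phi> m) m Q"
  shows "\<bar>\<phi> (density \<Omega> M m h) - fa_integral \<Omega> (density \<Omega> M m h) f\<bar> \<le> fa_integral \<Omega> m (\<lambda>x. \<bar>k x - f x\<bar>)"
proof -
  have fm: "fin_additive M m" and pos: "\<And>E. E \<in> M \<Longrightarrow> 0 \<le> m E"
    using m ba_fin_additive unfolding nonneg_ba_def by auto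
  have sh: "simple_fun \<Omega> M h" by (rule blockwise_const_simple_fun[OF Q h])
  have sk: "simple_fun \<Omega> M k" unfolding k_def by (rule partition_quotient_simple_fun[OF Q])
  have s1: "simple_fun \<Omega> M (\<lambda>x. h x * k x)" and s2: "simple_fun \<Omega> M (\<lambda>x. f x * h x)"
    using simple_fun_comb[OF sh sk] simple_fun_comb[OF f sh] by auto
  have s12: "simple_fun \<Omega> M (\<lambda>x. h x * k x - f x * h x)" using simple_fun_comb[OF s1 s2] .
  have "\<phi> (density \<Omega> M m h) = fa_integral \<Omega> m (\<lambda>x. h x * k x)"
    unfolding functional_density[OF lin m sh] k_def
    using fa_integral_partition_quotient[OF fm restricted_functional_fin_additive[OF lin m] bound Q h] by simp
  moreover have "fa_integral \<Omega> (density \<Omega> M m h) f = fa_integral \<Omega> m (\<lambda>x. f x * h x)"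
    by (rule fa_integral_density[OF fm sh f])
  ultimately have "\<bar>\<phi> (density \<Omega> M m h) - fa_integral \<Omega> (density \<Omega> M m h) f\<bar>
      = \<bar>fa_integral \<Omega> m (\<lambda>x. h x * k x - f x * h x)\<bar>"
    using fa_integral_diff[OF fm s1 s2] by simp
  also have "\<dots> \<le> fa_integral \<Omega> m (\<lambda>x. \<bar>h x * k x - f x * h x\<bar>)"
    by (rule fa_integral_abs_le[OF fm pos s12])
  also have "\<dots> \<le> fa_integral \<Omega> m (\<lambda>x. \<bar>k x - f x\<bar>)"
  proof (rule fa_integral_mono[OF fm pos simple_fun_comb1[OF s12]])
    show "simple_fun \<Omega> M (\<lambda>x. \<bar>k x - f x\<bar>)" using simple_fun_comb[OF sk f] .
    fix x assume "x \<in> \<Omega>"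
    have "\<bar>h x * k x - f x * h x\<bar> = \<bar>h x\<bar> * \<bar>k x - f x\<bar>"
      by (simp add: abs_mult[symmetric] algebra_simps)
    also have "\<dots> \<le> \<bar>k x - f x\<bar>" using h1[OF \<open>x \<in> \<Omega>\<close>] by (simp add: mult_left_le_one_le)
    finally show "\<bar>h x * k x - f x * h x\<bar> \<le> \<bar>k x - f x\<bar>" .
  qed
  finally show ?thesis .
qed

lemma quotient_density_difference:
  assumes m: "nonneg_ba \<Omega> M m" and f\<rho>: "fin_additive M \<rho>" and le: "\<And>E. E \<in> M \<Longrightarrow> \<bar>\<rho> E\<bar> \<le> 1 * m E"
    and Q: "is_partition \<Omega> M Q" and Q': "is_partition \<Omega> M Q'"
    and C: "C \<in> M" and CQ': "blockwise_const Q' (indicator C)"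
  defines "h \<equiv> partition_quotient \<rho> m Q" and "h' \<equiv> partition_quotient \<rho> m Q'"
  shows "\<bar>\<rho> C - density \<Omega> M m h C\<bar> \<le> fa_integral \<Omega> m (\<lambda>x. indicator C x * \<bar>h' x - h x\<bar>)"
proof -
  have fm: "fin_additive M m" and pos: "\<And>E. E \<in> M \<Longrightarrow> 0 \<le> m E"
    using m ba_fin_additive unfolding nonneg_ba_def by auto
  note sC = simple_fun_indicator[OF C]
  have sh: "simple_fun \<Omega> M h" and sh': "simple_fun \<Omega> M h'"
    unfolding h_def h'_def using partition_quotient_simple_fun Q Q' by auto
  have sa: "simple_fun \<Omega> M (\<lambda>x. indicator C x * h' x)" and sb: "simple_fun \<Omega> M (\<lambda>x. indicator C x * h x)"
    using simple_fun_comb[OF sC sh'] simple_fun_comb[OF sC sh] by auto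
  have "\<rho> C = fa_integral \<Omega> \<rho> (indicator C)" using fa_integral_indicator[OF f\<rho> C] by simp
  also have "\<dots> = fa_integral \<Omega> m (\<lambda>x. indicator C x * h' x)"
    unfolding h'_def using fa_integral_partition_quotient[OF fm f\<rho> le Q' CQ'] by simp
  finally have "\<rho> C - density \<Omega> M m h C
      = fa_integral \<Omega> m (\<lambda>x. indicator C x * h' x) - fa_integral \<Omega> m (\<lambda>x. indicator C x * h x)"
    unfolding density_def using C by simp
  also have "\<dots> = fa_integral \<Omega> m (\<lambda>x. indicator C x * (h' x - h x))"
    using fa_integral_diff[OF fm sa sb] by (simp add: algebra_simps)
  finally have "\<bar>\<rho> C - density \<Omega> M m h C\<bar> \<le> fa_integral \<Omega> m (\<lambda>x. \<bar>indicator C x * (h' x - h x)\<bar>)"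
    using fa_integral_abs_le[OF fm pos simple_fun_comb[OF sC simple_fun_comb[OF sh' sh]]] by simp
  also have "\<dots> = fa_integral \<Omega> m (\<lambda>x. indicator C x * \<bar>h' x - h x\<bar>)"
    by (rule fa_integral_cong) (simp add: abs_mult)
  finally show ?thesis .
qed

lemma quotient_density_variation:
  assumes m: "nonneg_ba \<Omega> M m" and f\<rho>: "fin_additive M \<rho>" and le: "\<And>E. E \<in> M \<Longrightarrow> \<bar>\<rho> E\<bar> \<le> 1 * m E"
    and Q: "is_partition \<Omega> M Q" and R: "is_partition \<Omega> M R"
  defines "h \<equiv> partition_quotient \<rho> m Q" and "h' \<equiv> partition_quotient \<rho> m (partition_meet Q R)"
  shows "(\<Sum>C\<in>R. \<bar>\<rho> C - density \<Omega> M m h C\<bar>) \<le> fa_integral \<Omega> m (\<lambda>x. \<bar>h' x - h x\<bar>)"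
proof -
  have Q': "is_partition \<Omega> M (partition_meet Q R)" by (rule is_partition_meet[OF Q R])
  have fm: "fin_additive M m" using m ba_fin_additive unfolding nonneg_ba_def by auto
  have sd: "simple_fun \<Omega> M (\<lambda>x. \<bar>h' x - h x\<bar>)"
    unfolding h_def h'_def
    using simple_fun_comb[OF partition_quotient_simple_fun[OF Q'] partition_quotient_simple_fun[OF Q]] .
  have "(\<Sum>C\<in>R. \<bar>\<rho> C - density \<Omega> M m h C\<bar>) \<le> (\<Sum>C\<in>R. fa_integral \<Omega> m (\<lambda>x. indicator C x * \<bar>h' x - h x\<bar>))"
  proof (rule sum_mono)
    fix C assume C: "C \<in> R"
    have "blockwise_const (partition_meet Q R) (indicator C)"
      using blockwise_const_finer[OF blockwise_const_indicator[OF R C] finer_partition_meet(2)] .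
    then show "\<bar>\<rho> C - density \<Omega> M m h C\<bar> \<le> fa_integral \<Omega> m (\<lambda>x. indicator C x * \<bar>h' x - h x\<bar>)"
      unfolding h_def h'_def using quotient_density_difference[OF m f\<rho> le Q Q'] partition_block_sets[OF R C]
      by blast
  qed
  also have "\<dots> = fa_integral \<Omega> m (\<lambda>x. \<Sum>C\<in>R. indicator C x * \<bar>h' x - h x\<bar>)"
    using R simple_fun_comb[OF simple_fun_indicator sd] unfolding is_partition_def
    by (intro fa_integral_sum[OF fm, symmetric]) auto
  also have "\<dots> = fa_integral \<Omega> m (\<lambda>x. \<bar>h' x - h x\<bar>)"
  proof (rule fa_integral_cong)
    fix x assume "x \<in> \<Omega>"
    then obtain C where "C \<in> R" "x \<in> C" using partition_cover[OF R] by auto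
    then show "(\<Sum>C\<in>R. indicator C x * \<bar>h' x - h x\<bar>) = \<bar>h' x - h x\<bar>"
      using partition_sum_indicator[OF R, of C x "\<lambda>_. \<bar>h' x - h x\<bar>"] by (simp add: mult.commute)
  qed
  finally show ?thesis .
qed

text \<open>Second error term: if Q refines a partition \<open>Q\<^sub>0\<close> beyond which the quotients of \<rho> vary
  by at most \<eta> in \<open>L\<^sup>1(m)\<close>, then \<open>\<parallel>\<rho> - (d\<rho>/dm)\<^sub>Q\<cdot>m\<parallel> \<le> 2\<eta>\<close>: compare both quotients
  along \<open>Q \<and> R\<close> and along Q with the one along \<open>Q\<^sub>0\<close>.\<close>
lemma quotient_density_norm_error:
  assumes m: "nonneg_ba \<Omega> M m" and f\<rho>: "fin_additive M \<rho>" and le: "\<And>E. E \<in> M \<Longrightarrow> \<bar>\<rho> E\<bar> \<le> 1 * m E"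
    and Q0: "is_partition \<Omega> M Q0"
    and cauchy: "\<And>Q. is_partition \<Omega> M Q \<Longrightarrow> finer Q Q0 \<Longrightarrow>
       fa_integral \<Omega> m (\<lambda>x. \<bar>partition_quotient \<rho> m Q x - partition_quotient \<rho> m Q0 x\<bar>) \<le> \<eta>"
    and Q: "is_partition \<Omega> M Q" and QQ0: "finer Q Q0"
  shows "tot_var M (\<lambda>E. \<rho> E - density \<Omega> M m (partition_quotient \<rho> m Q) E) \<Omega> \<le> 2 * \<eta>"
proof (rule tot_var_least[OF top])
  fix R assume "finite R" "R \<subseteq> M" "disjoint R" "\<Union>R = \<Omega>"
  then have R: "is_partition \<Omega> M R" unfolding is_partition_def by auto
  have Q': "is_partition \<Omega> M (partition_meet Q R)" by (rule is_partition_meet[OF Q R])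
  have fm: "fin_additive M m" and pos: "\<And>E. E \<in> M \<Longrightarrow> 0 \<le> m E"
    using m ba_fin_additive unfolding nonneg_ba_def by auto
  define h where "h = partition_quotient \<rho> m Q"
  define h' where "h' = partition_quotient \<rho> m (partition_meet Q R)"
  define k0 where "k0 = partition_quotient \<rho> m Q0"
  have sh: "simple_fun \<Omega> M h" and sh': "simple_fun \<Omega> M h'" and sk0: "simple_fun \<Omega> M k0"
    unfolding h_def h'_def k0_def using partition_quotient_simple_fun Q Q' Q0 by auto
  have s1: "simple_fun \<Omega> M (\<lambda>x. \<bar>h' x - k0 x\<bar>)" using simple_fun_comb[OF sh' sk0] .
  have s2: "simple_fun \<Omega> M (\<lambda>x. \<bar>h x - k0 x\<bar>)" using simple_fun_comb[OF sh sk0] .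
  have "(\<Sum>C\<in>R. \<bar>\<rho> C - density \<Omega> M m h C\<bar>) \<le> fa_integral \<Omega> m (\<lambda>x. \<bar>h' x - h x\<bar>)"
    unfolding h_def h'_def by (rule quotient_density_variation[OF m f\<rho> le Q R])
  also have "\<dots> \<le> fa_integral \<Omega> m (\<lambda>x. \<bar>h' x - k0 x\<bar> + \<bar>h x - k0 x\<bar>)"
    by (rule fa_integral_mono[OF fm pos simple_fun_comb[OF sh' sh] simple_fun_comb[OF s1 s2]]) auto
  also have "\<dots> = fa_integral \<Omega> m (\<lambda>x. \<bar>h' x - k0 x\<bar>) + fa_integral \<Omega> m (\<lambda>x. \<bar>h x - k0 x\<bar>)"
    by (rule fa_integral_add[OF fm s1 s2])
  also have "\<dots> \<le> \<eta> + \<eta>"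
    using cauchy[OF Q' finer_trans[OF finer_partition_meet(1) QQ0]] cauchy[OF Q QQ0]
    unfolding h'_def h_def k0_def by (intro add_mono)
  finally show "(\<Sum>C\<in>R. \<bar>\<rho> C - density \<Omega> M m (partition_quotient \<rho> m Q) C\<bar>) \<le> 2 * \<eta>"
    unfolding h_def by simp
qed

end

section \<open>Bounded functionals and nets\<close>

context algebra
begin

lemma bounded_imp_norm_continuous:
  assumes lin: "linear_on_ba \<Omega> M \<phi>" and B: "0 \<le> B"
    and bound: "\<And>\<nu>. \<nu> \<in> ba \<Omega> M \<Longrightarrow> \<bar>\<phi> \<nu>\<bar> \<le> B * tot_var M \<nu> \<Omega>"
  shows "norm_continuous_on_ba \<Omega> M \<phi>"
  unfolding norm_continuous_on_ba_def
proof (intro ballI allI impI)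
  fix \<mu> :: "'a set \<Rightarrow> real" and e :: real assume mu: "\<mu> \<in> ba \<Omega> M" and e: "0 < e"
  show "\<exists>\<delta>>0. \<forall>\<nu>\<in>ba \<Omega> M. ba_norm \<Omega> M (\<lambda>E. \<nu> E - \<mu> E) < \<delta> \<longrightarrow> \<bar>\<phi> \<nu> - \<phi> \<mu>\<bar> < e"
  proof (intro exI[of _ "e / (B + 1)"] conjI ballI impI)
    show "0 < e / (B + 1)" using e B by simp
    fix \<nu> assume nu: "\<nu> \<in> ba \<Omega> M" and close: "ba_norm \<Omega> M (\<lambda>E. \<nu> E - \<mu> E) < e / (B + 1)"
    have "\<bar>\<phi> \<nu> - \<phi> \<mu>\<bar> \<le> B * tot_var M (\<lambda>E. \<nu> E - \<mu> E) \<Omega>"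
      using bound[OF ba_diff[OF nu mu]] linear_diff[OF lin nu mu] by simp
    also have "\<dots> \<le> B * (e / (B + 1))"
      using close B unfolding ba_norm_def by (intro mult_left_mono) auto
    also have "\<dots> < e" using e B by (simp add: field_simps)
    finally show "\<bar>\<phi> \<nu> - \<phi> \<mu>\<bar> < e" .
  qed
qed

text \<open>Conversely, continuity at 0 bounds \<phi> on the unit ball, so the operator norm
  \<open>\<parallel>\<phi>\<parallel> = sup {|\<phi> \<mu>| | \<parallel>\<mu>\<parallel> \<le> 1}\<close> is a well-defined supremum.\<close>
lemma norm_continuous_unit_ball_bdd:
  assumes lin: "linear_on_ba \<Omega> M \<phi>" and nc: "norm_continuous_on_ba \<Omega> M \<phi>"
  shows "bdd_above {\<bar>\<phi> \<mu>\<bar> | \<mu>. \<mu> \<in> ba \<Omega> M \<and> ba_norm \<Omega> M \<mu> \<le> 1}"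
proof -
  have "\<forall>\<epsilon>>0. \<exists>\<delta>>0. \<forall>\<nu>\<in>ba \<Omega> M. ba_norm \<Omega> M (\<lambda>E. \<nu> E - 0) < \<delta> \<longrightarrow> \<bar>\<phi> \<nu> - \<phi> (\<lambda>E. 0)\<bar> < \<epsilon>"
    using bspec[OF nc[unfolded norm_continuous_on_ba_def] ba_zero] by simp
  then have "\<exists>\<delta>>0. \<forall>\<nu>\<in>ba \<Omega> M. ba_norm \<Omega> M (\<lambda>E. \<nu> E - 0) < \<delta> \<longrightarrow> \<bar>\<phi> \<nu> - \<phi> (\<lambda>E. 0)\<bar> < 1"
    by simp
  then obtain \<delta> where \<delta>: "0 < \<delta>"
    and continuity: "\<forall>\<nu>\<in>ba \<Omega> M. ba_norm \<Omega> M (\<lambda>E. \<nu> E - 0) < \<delta> \<longrightarrow> \<bar>\<phi> \<nu> - \<phi> (\<lambda>E. 0)\<bar> < 1"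
    by (elim exE conjE)
  have small: "\<bar>\<phi> \<nu>\<bar> < 1" if "\<nu> \<in> ba \<Omega> M" "tot_var M \<nu> \<Omega> < \<delta>" for \<nu>
    using continuity that linear_zero[OF lin] unfolding ba_norm_def by simp
  have "\<bar>\<phi> \<mu>\<bar> \<le> 2 / \<delta>" if mu: "\<mu> \<in> ba \<Omega> M" "tot_var M \<mu> \<Omega> \<le> 1" for \<mu>
  proof -
    have "tot_var M (\<lambda>E. (\<delta> / 2) * \<mu> E) \<Omega> \<le> \<delta> / 2 * tot_var M \<mu> \<Omega>"
      using tot_var_cmult_le[OF mu(1), of "\<delta> / 2"] \<delta> by simp
    also have "\<dots> \<le> \<delta> / 2" using mu(2) \<delta> by (simp add: mult_left_le)
    also have "\<dots> < \<delta>" using \<delta> by simp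
    finally have "\<bar>\<phi> (\<lambda>E. (\<delta> / 2) * \<mu> E)\<bar> < 1" by (rule small[OF ba_cmult[OF mu(1)]])
    then have "\<bar>\<delta> / 2 * \<phi> \<mu>\<bar> < 1" by (simp only: linear_cmult[OF lin mu(1)])
    then have "\<delta> / 2 * \<bar>\<phi> \<mu>\<bar> < 1" using \<delta> by (simp add: abs_mult)
    then show ?thesis using \<delta> by (simp add: field_simps)
  qed
  then show ?thesis unfolding ba_norm_def by (intro bdd_aboveI[of _ "2 / \<delta>"]) auto
qed

lemma functional_norm_nonneg:
  assumes lin: "linear_on_ba \<Omega> M \<phi>" and nc: "norm_continuous_on_ba \<Omega> M \<phi>"
  shows "0 \<le> functional_norm \<Omega> M \<phi>"
  unfolding functional_norm_def
  using ba_zero tot_var_zero linear_zero[OF lin] norm_continuous_unit_ball_bdd[OF lin nc]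
  by (intro cSup_upper) (auto simp: ba_norm_def intro!: exI[of _ "\<lambda>E. 0"])

lemma functional_norm_bound:
  assumes lin: "linear_on_ba \<Omega> M \<phi>" and nc: "norm_continuous_on_ba \<Omega> M \<phi>" and nu: "\<nu> \<in> ba \<Omega> M"
  shows "\<bar>\<phi> \<nu>\<bar> \<le> functional_norm \<Omega> M \<phi> * tot_var M \<nu> \<Omega>"
proof (cases "tot_var M \<nu> \<Omega> = 0")
  case True
  then show ?thesis using norm_eq_zero_ba[OF nu] linear_zero[OF lin] functional_norm_nonneg[OF lin nc] by simp
next
  case False
  define r where "r = tot_var M \<nu> \<Omega>"
  have r: "0 < r" using False norm_nonneg_ba[OF nu] unfolding r_def by simp
  define \<nu>' where "\<nu>' = (\<lambda>E. (1 / r) * \<nu> E)"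
  have "\<nu>' \<in> ba \<Omega> M" unfolding \<nu>'_def by (rule ba_cmult[OF nu])
  moreover have "tot_var M \<nu>' \<Omega> \<le> 1"
    using tot_var_cmult_le[OF nu, of "1 / r"] r unfolding r_def \<nu>'_def by simp
  ultimately have "\<bar>\<phi> \<nu>'\<bar> \<le> functional_norm \<Omega> M \<phi>"
    unfolding functional_norm_def using norm_continuous_unit_ball_bdd[OF lin nc]
    by (intro cSup_upper) (auto simp: ba_norm_def)
  moreover have "\<phi> \<nu>' = (1 / r) * \<phi> \<nu>" unfolding \<nu>'_def by (rule linear_cmult[OF lin nu])
  ultimately have "\<bar>\<phi> \<nu>\<bar> / r \<le> functional_norm \<Omega> M \<phi>" using r by (simp add: abs_mult)
  then show ?thesis using r unfolding r_def by (simp add: pos_divide_le_eq)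
qed

lemma functional_norm_least:
  assumes lin: "linear_on_ba \<Omega> M \<phi>"
    and le: "\<And>\<mu>. \<mu> \<in> ba \<Omega> M \<Longrightarrow> tot_var M \<mu> \<Omega> \<le> 1 \<Longrightarrow> \<bar>\<phi> \<mu>\<bar> \<le> r"
  shows "functional_norm \<Omega> M \<phi> \<le> r"
  unfolding functional_norm_def using ba_zero tot_var_zero le
  by (intro cSup_least) (auto simp: ba_norm_def)

end

lemma directed_setD:
  assumes d: "directed_set I le"
  shows "I \<noteq> {}" "\<And>a. a \<in> I \<Longrightarrow> le a a"
    "\<And>a b c. a \<in> I \<Longrightarrow> b \<in> I \<Longrightarrow> c \<in> I \<Longrightarrow> le a b \<Longrightarrow> le b c \<Longrightarrow> le a c"
    "\<And>a b. a \<in> I \<Longrightarrow> b \<in> I \<Longrightarrow> \<exists>c\<in>I. le a c \<and> le b c"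
proof -
  note dd = d[unfolded directed_set_def]
  show "I \<noteq> {}" using dd by (rule conjunct1)
  show "\<And>a. a \<in> I \<Longrightarrow> le a a" using dd by (elim conjE) (rule bspec)
  have "\<forall>a\<in>I. \<forall>b\<in>I. \<forall>c\<in>I. le a b \<longrightarrow> le b c \<longrightarrow> le a c" using dd by (elim conjE)
  then show "\<And>a b c. a \<in> I \<Longrightarrow> b \<in> I \<Longrightarrow> c \<in> I \<Longrightarrow> le a b \<Longrightarrow> le b c \<Longrightarrow> le a c" by blast
  have "\<forall>a\<in>I. \<forall>b\<in>I. \<exists>c\<in>I. le a c \<and> le b c" using dd by (elim conjE)
  then show "\<And>a b. a \<in> I \<Longrightarrow> b \<in> I \<Longrightarrow> \<exists>c\<in>I. le a c \<and> le b c" by blast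
qed

lemma eventually_net_filter:
  assumes d: "directed_set I le"
  shows "eventually P (net_filter I le) \<longleftrightarrow> (\<exists>a\<in>I. \<forall>b\<in>I. le a b \<longrightarrow> P b)"
proof -
  have "eventually P (net_filter I le) \<longleftrightarrow> (\<exists>a\<in>I. eventually P (principal {b\<in>I. le a b}))"
    unfolding net_filter_def
  proof (rule eventually_INF_base)
    show "I \<noteq> {}" by (rule directed_setD(1)[OF d])
    fix a b assume a: "a \<in> I" and b: "b \<in> I"
    obtain c where c: "c \<in> I" "le a c" "le b c" using directed_setD(4)[OF d a b] by blast
    have "{x\<in>I. le c x} \<subseteq> {x\<in>I. le a x} \<inter> {x\<in>I. le b x}"
      using directed_setD(3)[OF d a c(1)] directed_setD(3)[OF d b c(1)] c by auto
    then show "\<exists>x\<in>I. principal {y\<in>I. le x y} \<le> inf (principal {y\<in>I. le a y}) (principal {y\<in>I. le b y})"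
      using c(1) by auto
  qed
  then show ?thesis by (auto simp: eventually_principal)
qed

lemma net_filter_nontrivial: "directed_set I le \<Longrightarrow> net_filter I le \<noteq> bot"
  using eventually_net_filter[of I le "\<lambda>_. False"] directed_setD(1,2)[of I le]
  by (auto simp: trivial_limit_def)

context algebra
begin

text \<open>The easy direction: a representing net is bounded by some B, and
  \<open>|\<integral>f\<^sub>\<alpha> d\<nu>| \<le> B \<parallel>\<nu>\<parallel>\<close> passes to the limit, so \<phi> is bounded and hence continuous.\<close>
lemma representing_net_imp_norm_continuous:
  assumes lin: "linear_on_ba \<Omega> M \<phi>" and rn: "representing_net \<Omega> M \<phi> I le f"
  shows "norm_continuous_on_ba \<Omega> M \<phi>"
proof -
  have d: "directed_set I le" and sf: "\<And>a. a \<in> I \<Longrightarrow> simple_fun \<Omega> M (f a)"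
    and lim: "\<And>\<nu>. \<nu> \<in> ba \<Omega> M \<Longrightarrow> ((\<lambda>a. fa_integral \<Omega> \<nu> (f a)) \<longlongrightarrow> \<phi> \<nu>) (net_filter I le)"
    using rn unfolding representing_net_def by blast+
  obtain B0 where B0: "\<And>a. a \<in> I \<Longrightarrow> sup_norm \<Omega> (f a) \<le> B0"
    using rn unfolding representing_net_def by blast
  define B where "B = max B0 0"
  obtain a0 where a0: "a0 \<in> I" using directed_setD(1)[OF d] by auto
  have B: "0 \<le> B" unfolding B_def by simp
  have bound: "\<bar>\<phi> \<nu>\<bar> \<le> B * tot_var M \<nu> \<Omega>" if nu: "\<nu> \<in> ba \<Omega> M" for \<nu>
  proof (rule tendsto_upperbound[OF tendsto_rabs[OF lim[OF nu]]])
    have "\<bar>fa_integral \<Omega> \<nu> (f b)\<bar> \<le> B * tot_var M \<nu> \<Omega>" if "b \<in> I" for b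
      using fa_integral_bound[OF nu sf[OF that]] B0[OF that] norm_nonneg_ba[OF nu]
      unfolding B_def by (smt (verit) mult_right_mono)
    then show "eventually (\<lambda>a. \<bar>fa_integral \<Omega> \<nu> (f a)\<bar> \<le> B * tot_var M \<nu> \<Omega>) (net_filter I le)"
      unfolding eventually_net_filter[OF d] using a0 by blast
  qed (use net_filter_nontrivial[OF d] in simp)
  show ?thesis by (rule bounded_imp_norm_continuous[OF lin B bound])
qed


lemma approximation_error_perturb:
  assumes lin: "linear_on_ba \<Omega> M \<phi>" and bound: "\<And>\<nu>. \<nu> \<in> ba \<Omega> M \<Longrightarrow> \<bar>\<phi> \<nu>\<bar> \<le> K * tot_var M \<nu> \<Omega>"
    and f: "simple_fun \<Omega> M f" and fK: "sup_norm \<Omega> f \<le> K"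
    and \<rho>: "\<rho> \<in> ba \<Omega> M" and \<rho>': "\<rho>' \<in> ba \<Omega> M"
  shows "\<bar>\<phi> \<rho> - fa_integral \<Omega> \<rho> f\<bar>
    \<le> \<bar>\<phi> \<rho>' - fa_integral \<Omega> \<rho>' f\<bar> + 2 * K * tot_var M (\<lambda>E. \<rho> E - \<rho>' E) \<Omega>"
proof -
  define e where "e = (\<lambda>E. \<rho> E - \<rho>' E)"
  have e: "e \<in> ba \<Omega> M" unfolding e_def by (rule ba_diff[OF \<rho> \<rho>'])
  have "\<phi> \<rho> = \<phi> \<rho>' + \<phi> e" using linear_add[OF lin \<rho>' e] unfolding e_def by simp
  moreover have "fa_integral \<Omega> \<rho> f = fa_integral \<Omega> \<rho>' f + fa_integral \<Omega> e f"
    using fa_integral_measure_add[of \<rho>' e f] unfolding e_def by simp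
  moreover have "\<bar>fa_integral \<Omega> e f\<bar> \<le> K * tot_var M e \<Omega>"
    using fa_integral_bound[OF e f] fK norm_nonneg_ba[OF e] by (meson mult_right_mono order_trans)
  ultimately show ?thesis using bound[OF e] unfolding e_def[symmetric] by linarith
qed

text \<open>Main approximation theorem: for a bounded \<phi> and a nonnegative m, one simple f with
  \<open>|f| \<le> K\<close> approximates \<phi> within \<epsilon> on all \<rho> dominated by m. f is the quotient of \<open>\<psi>\<^sub>m\<close> along a
  partition P from the Cauchy lemma; a given \<rho> is compared with its quotient density
  \<open>(d\<rho>/dm)\<^sub>Q\<cdot>m\<close> along a common refinement Q.\<close>
theorem simple_approximation:
  assumes lin: "linear_on_ba \<Omega> M \<phi>" and bound: "\<And>\<nu>. \<nu> \<in> ba \<Omega> M \<Longrightarrow> \<bar>\<phi> \<nu>\<bar> \<le> K * tot_var M \<nu> \<Omega>"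
    and K: "0 \<le> K" and m: "nonneg_ba \<Omega> M m" and \<epsilon>: "0 < \<epsilon>"
  obtains f where "simple_fun \<Omega> M f" "\<And>x. x \<in> \<Omega> \<Longrightarrow> \<bar>f x\<bar> \<le> K"
    "\<And>\<rho>. \<rho> \<in> ba \<Omega> M \<Longrightarrow> (\<And>E. E \<in> M \<Longrightarrow> \<bar>\<rho> E\<bar> \<le> m E) \<Longrightarrow> \<bar>\<phi> \<rho> - fa_integral \<Omega> \<rho> f\<bar> \<le> \<epsilon>"
proof -
  have pos: "\<And>E. E \<in> M \<Longrightarrow> 0 \<le> m E" using m unfolding nonneg_ba_def by auto
  define \<eta> where "\<eta> = \<epsilon> / (1 + 4 * K)"
  have \<eta>: "0 < \<eta>" unfolding \<eta>_def using \<epsilon> K by simp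
  have "\<eta> * (1 + 4 * K) = \<epsilon>" unfolding \<eta>_def using K by simp
  then have \<eta>_sum: "\<eta> + 2 * K * (2 * \<eta>) = \<epsilon>" by (simp add: algebra_simps)
  let ?\<psi> = "restricted_functional \<Omega> M \<phi> m"
  note \<psi>bound = restricted_functional_bound[OF bound K m]
  obtain P where P: "is_partition \<Omega> M P"
    and P\<eta>: "\<And>Q. is_partition \<Omega> M Q \<Longrightarrow> finer Q P \<Longrightarrow>
       fa_integral \<Omega> m (\<lambda>x. \<bar>partition_quotient ?\<psi> m Q x - partition_quotient ?\<psi> m P x\<bar>) \<le> \<eta>"
    using partition_quotient_cauchy[OF m restricted_functional_fin_additive[OF lin m] K \<psi>bound \<eta>] by blast
  define f where "f = partition_quotient ?\<psi> m P"
  have sf: "simple_fun \<Omega> M f" unfolding f_def by (rule partition_quotient_simple_fun[OF P])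
  have fK: "\<And>x. x \<in> \<Omega> \<Longrightarrow> \<bar>f x\<bar> \<le> K" unfolding f_def by (rule partition_quotient_bound[OF P K pos \<psi>bound])
  show ?thesis
  proof (rule that[OF sf fK])
    fix \<rho> assume \<rho>: "\<rho> \<in> ba \<Omega> M" and dom: "\<And>E. E \<in> M \<Longrightarrow> \<bar>\<rho> E\<bar> \<le> m E"
    have \<rho>1: "\<And>E. E \<in> M \<Longrightarrow> \<bar>\<rho> E\<bar> \<le> 1 * m E" using dom by simp
    obtain Q0 where Q0: "is_partition \<Omega> M Q0"
      and Q0\<eta>: "\<And>Q. is_partition \<Omega> M Q \<Longrightarrow> finer Q Q0 \<Longrightarrow>
         fa_integral \<Omega> m (\<lambda>x. \<bar>partition_quotient \<rho> m Q x - partition_quotient \<rho> m Q0 x\<bar>) \<le> \<eta>"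
      using partition_quotient_cauchy[OF m ba_fin_additive[OF \<rho>] zero_le_one \<rho>1 \<eta>] by blast
    define Q where "Q = partition_meet P Q0"
    have Q: "is_partition \<Omega> M Q" unfolding Q_def by (rule is_partition_meet[OF P Q0])
    define h where "h = partition_quotient \<rho> m Q"
    have h: "blockwise_const Q h" "\<And>x. x \<in> \<Omega> \<Longrightarrow> \<bar>h x\<bar> \<le> 1"
      unfolding h_def using partition_quotient_blockwise_const[OF Q]
        partition_quotient_bound[OF Q zero_le_one pos \<rho>1] by auto
    have \<rho>Q: "density \<Omega> M m h \<in> ba \<Omega> M"
      using density_ba(1)[OF m blockwise_const_simple_fun[OF Q h(1)] h(2) zero_le_one] .
    have "\<bar>\<phi> (density \<Omega> M m h) - fa_integral \<Omega> (density \<Omega> M m h) f\<bar> \<le> \<eta>"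
      using functional_density_error[OF lin m \<psi>bound Q h sf] P\<eta>[OF Q] finer_partition_meet(1)
      unfolding f_def Q_def by (meson order_trans)
    moreover have "tot_var M (\<lambda>E. \<rho> E - density \<Omega> M m h E) \<Omega> \<le> 2 * \<eta>"
      unfolding h_def using quotient_density_norm_error[OF m ba_fin_additive[OF \<rho>] \<rho>1 Q0 Q0\<eta> Q]
        finer_partition_meet(2) unfolding Q_def by blast
    moreover have "sup_norm \<Omega> f \<le> K" by (rule sup_norm_le[OF K fK])
    ultimately show "\<bar>\<phi> \<rho> - fa_integral \<Omega> \<rho> f\<bar> \<le> \<epsilon>"
      using approximation_error_perturb[OF lin bound sf _ \<rho> \<rho>Q] K \<eta>_sum
      by (smt (verit, best) mult_left_mono)
  qed
qed

end

section \<open>The representing net\<close>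

definition approx_index :: "'a set \<Rightarrow> 'a set set \<Rightarrow> (('a set \<Rightarrow> real) \<times> nat) set" where
  "approx_index \<Omega> A = {a. nonneg_ba \<Omega> A (fst a)}"

definition approx_le :: "('a set \<Rightarrow> real) \<times> nat \<Rightarrow> ('a set \<Rightarrow> real) \<times> nat \<Rightarrow> bool" where
  "approx_le a b \<longleftrightarrow> (\<forall>E. fst a E \<le> fst b E) \<and> snd a \<le> snd b"

definition good_approx :: "'a set \<Rightarrow> 'a set set \<Rightarrow> (('a set \<Rightarrow> real) \<Rightarrow> real) \<Rightarrow> real
    \<Rightarrow> ('a set \<Rightarrow> real) \<times> nat \<Rightarrow> ('a \<Rightarrow> real) \<Rightarrow> bool" where
  "good_approx \<Omega> A \<phi> K a f \<longleftrightarrow> simple_fun \<Omega> A f \<and> (\<forall>x\<in>\<Omega>. \<bar>f x\<bar> \<le> K) \<and>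
     (\<forall>\<rho>\<in>ba \<Omega> A. (\<forall>E\<in>A. \<bar>\<rho> E\<bar> \<le> fst a E) \<longrightarrow>
        \<bar>\<phi> \<rho> - fa_integral \<Omega> \<rho> f\<bar> \<le> inverse (real (Suc (snd a))))"

definition approx_net :: "'a set \<Rightarrow> 'a set set \<Rightarrow> (('a set \<Rightarrow> real) \<Rightarrow> real) \<Rightarrow> real
    \<Rightarrow> ('a set \<Rightarrow> real) \<times> nat \<Rightarrow> 'a \<Rightarrow> real" where
  "approx_net \<Omega> A \<phi> K a = (SOME f. good_approx \<Omega> A \<phi> K a f)"

context algebra
begin

lemma approx_index_directed: "directed_set (approx_index \<Omega> M) approx_le"
  unfolding directed_set_def
proof (intro conjI ballI impI)
  show "approx_index \<Omega> M \<noteq> {}"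
    using nonneg_ba_zero unfolding approx_index_def by (auto intro!: exI[of _ "(\<lambda>E. 0, 0)"])
  show "approx_le a a" for a :: "('a set \<Rightarrow> real) \<times> nat" unfolding approx_le_def by simp
  show "approx_le a c" if "approx_le a b" "approx_le b c" for a b c :: "('a set \<Rightarrow> real) \<times> nat"
    using that unfolding approx_le_def by (meson order_trans)
  fix a b assume "a \<in> approx_index \<Omega> M" "b \<in> approx_index \<Omega> M"
  then have a: "nonneg_ba \<Omega> M (fst a)" and b: "nonneg_ba \<Omega> M (fst b)" unfolding approx_index_def by auto
  let ?c = "(\<lambda>E. fst a E + fst b E, max (snd a) (snd b))"
  have "?c \<in> approx_index \<Omega> M" using nonneg_ba_add[OF a b] unfolding approx_index_def by simp
  moreover have "approx_le a ?c" "approx_le b ?c"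
    unfolding approx_le_def using nonneg_ba_nonneg[OF a] nonneg_ba_nonneg[OF b] by auto
  ultimately show "\<exists>c\<in>approx_index \<Omega> M. approx_le a c \<and> approx_le b c" by blast
qed

lemma approx_net_good:
  assumes lin: "linear_on_ba \<Omega> M \<phi>" and bound: "\<And>\<nu>. \<nu> \<in> ba \<Omega> M \<Longrightarrow> \<bar>\<phi> \<nu>\<bar> \<le> K * tot_var M \<nu> \<Omega>"
    and K: "0 \<le> K" and a: "a \<in> approx_index \<Omega> M"
  shows "good_approx \<Omega> M \<phi> K a (approx_net \<Omega> M \<phi> K a)"
proof -
  have m: "nonneg_ba \<Omega> M (fst a)" using a unfolding approx_index_def by auto
  obtain f where "simple_fun \<Omega> M f" "\<And>x. x \<in> \<Omega> \<Longrightarrow> \<bar>f x\<bar> \<le> K"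
    "\<And>\<rho>. \<rho> \<in> ba \<Omega> M \<Longrightarrow> (\<And>E. E \<in> M \<Longrightarrow> \<bar>\<rho> E\<bar> \<le> fst a E) \<Longrightarrow>
       \<bar>\<phi> \<rho> - fa_integral \<Omega> \<rho> f\<bar> \<le> inverse (real (Suc (snd a)))"
    using simple_approximation[OF lin bound K m, of "inverse (real (Suc (snd a)))"] by auto
  then have "\<exists>f. good_approx \<Omega> M \<phi> K a f" unfolding good_approx_def by blast
  then show ?thesis unfolding approx_net_def by (rule someI_ex)
qed

lemma good_approx_beyond:
  assumes good: "good_approx \<Omega> M \<phi> K a f" and le: "approx_le (tv_measure M \<mu>, N) a"
    and \<rho>: "\<rho> \<in> ba \<Omega> M" and dom: "\<And>E. E \<in> M \<Longrightarrow> \<bar>\<rho> E\<bar> \<le> tv_measure M \<mu> E"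
  shows "\<bar>\<phi> \<rho> - fa_integral \<Omega> \<rho> f\<bar> \<le> inverse (real (Suc N))"
proof -
  have "\<forall>E\<in>M. \<bar>\<rho> E\<bar> \<le> fst a E" using dom le unfolding approx_le_def by (auto intro: order_trans)
  then have "\<bar>\<phi> \<rho> - fa_integral \<Omega> \<rho> f\<bar> \<le> inverse (real (Suc (snd a)))"
    using good \<rho> unfolding good_approx_def by blast
  also have "\<dots> \<le> inverse (real (Suc N))" using le unfolding approx_le_def by (simp add: le_imp_inverse_le)
  finally show ?thesis .
qed

lemma approx_net_simple_bounded:
  assumes lin: "linear_on_ba \<Omega> M \<phi>" and nc: "norm_continuous_on_ba \<Omega> M \<phi>"
    and a: "a \<in> approx_index \<Omega> M"
  defines "K \<equiv> functional_norm \<Omega> M \<phi>"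
  shows "good_approx \<Omega> M \<phi> K a (approx_net \<Omega> M \<phi> K a)"
    "simple_fun \<Omega> M (approx_net \<Omega> M \<phi> K a)" "sup_norm \<Omega> (approx_net \<Omega> M \<phi> K a) \<le> K"
proof -
  show good: "good_approx \<Omega> M \<phi> K a (approx_net \<Omega> M \<phi> K a)"
    unfolding K_def using approx_net_good[OF lin functional_norm_bound[OF lin nc]
      functional_norm_nonneg[OF lin nc] a] .
  then show "simple_fun \<Omega> M (approx_net \<Omega> M \<phi> K a)" unfolding good_approx_def by blast
  show "sup_norm \<Omega> (approx_net \<Omega> M \<phi> K a) \<le> K"
    using good functional_norm_nonneg[OF lin nc] unfolding good_approx_def K_def
    by (intro sup_norm_le) auto
qed

lemma approx_net_tendsto:
  assumes lin: "linear_on_ba \<Omega> M \<phi>" and nc: "norm_continuous_on_ba \<Omega> M \<phi>" and mu: "\<mu> \<in> ba \<Omega> M"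
  defines "K \<equiv> functional_norm \<Omega> M \<phi>"
  shows "((\<lambda>a. fa_integral \<Omega> \<mu> (approx_net \<Omega> M \<phi> K a)) \<longlongrightarrow> \<phi> \<mu>) (net_filter (approx_index \<Omega> M) approx_le)"
proof (rule tendstoI)
  fix e :: real assume "0 < e"
  then obtain N where N: "inverse (real (Suc N)) < e" using reals_Archimedean by blast
  have start: "(tv_measure M \<mu>, N) \<in> approx_index \<Omega> M"
    unfolding approx_index_def using nonneg_ba_tv_measure[OF mu] by simp
  have "dist (fa_integral \<Omega> \<mu> (approx_net \<Omega> M \<phi> K b)) (\<phi> \<mu>) < e"
    if "b \<in> approx_index \<Omega> M" "approx_le (tv_measure M \<mu>, N) b" for b
    using good_approx_beyond[OF approx_net_simple_bounded(1)[OF lin nc that(1)] that(2) mu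
        abs_le_tv_measure[OF mu]] N
    unfolding K_def by (simp add: dist_real_def abs_minus_commute)
  then show "eventually (\<lambda>b. dist (fa_integral \<Omega> \<mu> (approx_net \<Omega> M \<phi> K b)) (\<phi> \<mu>) < e)
      (net_filter (approx_index \<Omega> M) approx_le)"
    unfolding eventually_net_filter[OF approx_index_directed] using start by blast
qed

text \<open>The \<open>L\<^sup>1(\<mu>)\<close> Cauchy property: \<open>\<integral>|f\<^sub>1 - f\<^sub>2| d|\<mu>| = \<rho>(f\<^sub>1) - \<rho>(f\<^sub>2)\<close> for the density
  \<open>\<rho> = sgn(f\<^sub>1 - f\<^sub>2)\<cdot>|\<mu>|\<close>, which is dominated by \<open>|\<mu>|\<close>; beyond \<open>(|\<mu>|, N)\<close> both terms are within
  \<open>1/(N+1)\<close> of \<open>\<phi>(\<rho>)\<close>.\<close>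
lemma approx_net_L1_cauchy:
  assumes lin: "linear_on_ba \<Omega> M \<phi>" and nc: "norm_continuous_on_ba \<Omega> M \<phi>" and mu: "\<mu> \<in> ba \<Omega> M"
  defines "K \<equiv> functional_norm \<Omega> M \<phi>"
  shows "L1_cauchy_net \<Omega> M \<mu> (approx_index \<Omega> M) approx_le (approx_net \<Omega> M \<phi> K)"
  unfolding L1_cauchy_net_def
proof (intro allI impI)
  let ?F = "approx_net \<Omega> M \<phi> K" and ?m = "tv_measure M \<mu>"
  fix e :: real assume "0 < e"
  then obtain N where N: "2 * inverse (real (Suc N)) < e"
    using reals_Archimedean[of "e / 2"] by (auto simp: field_simps)
  note m = nonneg_ba_tv_measure[OF mu]
  have fm: "fin_additive M ?m" using m ba_fin_additive unfolding nonneg_ba_def by auto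
  have "fa_integral \<Omega> (tot_var M \<mu>) (\<lambda>x. \<bar>?F a1 x - ?F a2 x\<bar>) < e"
    if a1: "a1 \<in> approx_index \<Omega> M" "approx_le (?m, N) a1"
      and a2: "a2 \<in> approx_index \<Omega> M" "approx_le (?m, N) a2" for a1 a2
  proof -
    note good1 = approx_net_simple_bounded[OF lin nc a1(1), folded K_def]
      and good2 = approx_net_simple_bounded[OF lin nc a2(1), folded K_def]
    let ?d = "\<lambda>x. ?F a1 x - ?F a2 x"
    have sd: "simple_fun \<Omega> M ?d" using simple_fun_comb[OF good1(2) good2(2)] .
    have ss: "simple_fun \<Omega> M (\<lambda>x. sgn (?d x))" using simple_fun_comb1[OF sd] .
    have s1: "\<And>x. x \<in> \<Omega> \<Longrightarrow> \<bar>sgn (?d x)\<bar> \<le> 1" by (simp add: abs_sgn_eq)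
    define \<rho> where "\<rho> = density \<Omega> M ?m (\<lambda>x. sgn (?d x))"
    have \<rho>: "\<rho> \<in> ba \<Omega> M" unfolding \<rho>_def by (rule density_ba(1)[OF m ss s1 zero_le_one])
    have dom: "\<And>E. E \<in> M \<Longrightarrow> \<bar>\<rho> E\<bar> \<le> ?m E"
      unfolding \<rho>_def using density_abs_le[OF m ss s1] by simp
    have "fa_integral \<Omega> (tot_var M \<mu>) (\<lambda>x. \<bar>?d x\<bar>) = fa_integral \<Omega> ?m (\<lambda>x. ?d x * sgn (?d x))"
      using fa_integral_measure_cong[OF simple_fun_comb1[OF sd], of "tot_var M \<mu>" ?m]
      by (simp add: tv_measure_def abs_sgn[symmetric])
    also have "\<dots> = fa_integral \<Omega> \<rho> ?d" unfolding \<rho>_def by (rule fa_integral_density[OF fm ss sd, symmetric])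
    also have "\<dots> = fa_integral \<Omega> \<rho> (?F a1) - fa_integral \<Omega> \<rho> (?F a2)"
      by (rule fa_integral_diff[OF ba_fin_additive[OF \<rho>] good1(2) good2(2)])
    also have "\<dots> \<le> 2 * inverse (real (Suc N))"
      using good_approx_beyond[OF good1(1) a1(2) \<rho> dom] good_approx_beyond[OF good2(1) a2(2) \<rho> dom]
      by linarith
    finally show ?thesis using N by linarith
  qed
  moreover have "(?m, N) \<in> approx_index \<Omega> M" unfolding approx_index_def using m by simp
  ultimately show "\<exists>a0\<in>approx_index \<Omega> M. \<forall>a1\<in>approx_index \<Omega> M. \<forall>a2\<in>approx_index \<Omega> M.
      approx_le a0 a1 \<longrightarrow> approx_le a0 a2 \<longrightarrow> fa_integral \<Omega> (tot_var M \<mu>) (\<lambda>x. \<bar>?F a1 x - ?F a2 x\<bar>) < e"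
    by blast
qed


text \<open>\<open>limsup \<parallel>f\<^sub>\<alpha>\<parallel>\<^sub>\<infinity> = \<parallel>\<phi>\<parallel>\<close>: the net is bounded by \<open>\<parallel>\<phi>\<parallel>\<close>, and for \<open>\<parallel>\<mu>\<parallel> \<le> 1\<close> the limit
  \<open>|\<phi> \<mu>| = lim |\<mu>(f\<^sub>\<alpha>)|\<close> is at most \<open>limsup \<parallel>f\<^sub>\<alpha>\<parallel>\<^sub>\<infinity>\<close>.\<close>
lemma approx_net_limsup:
  assumes lin: "linear_on_ba \<Omega> M \<phi>" and nc: "norm_continuous_on_ba \<Omega> M \<phi>"
  defines "K \<equiv> functional_norm \<Omega> M \<phi>" and "F \<equiv> net_filter (approx_index \<Omega> M) approx_le"
  shows "Limsup F (\<lambda>a. ereal (sup_norm \<Omega> (approx_net \<Omega> M \<phi> K a))) = ereal K"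
proof -
  let ?f = "approx_net \<Omega> M \<phi> K" and ?L = "Limsup F (\<lambda>a. ereal (sup_norm \<Omega> (approx_net \<Omega> M \<phi> K a)))"
  note good = approx_net_simple_bounded[OF lin nc, folded K_def]
  note ev = eventually_net_filter[OF approx_index_directed, folded F_def]
  obtain a0 where a0: "a0 \<in> approx_index \<Omega> M" using directed_setD(1)[OF approx_index_directed] by auto
  have "\<forall>b\<in>approx_index \<Omega> M. approx_le a0 b \<longrightarrow> ereal (sup_norm \<Omega> (?f b)) \<le> ereal K"
    using good(3) by simp
  then have "eventually (\<lambda>a. ereal (sup_norm \<Omega> (?f a)) \<le> ereal K) F"
    unfolding ev using a0 by blast
  then have upper: "?L \<le> ereal K" by (rule Limsup_bounded)
  have ge: "ereal \<bar>\<phi> \<mu>\<bar> \<le> ?L" if mu: "\<mu> \<in> ba \<Omega> M" "tot_var M \<mu> \<Omega> \<le> 1" for \<mu>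
  proof -
    have "((\<lambda>a. ereal \<bar>fa_integral \<Omega> \<mu> (?f a)\<bar>) \<longlongrightarrow> ereal \<bar>\<phi> \<mu>\<bar>) F"
      unfolding F_def K_def by (intro tendsto_ereal tendsto_rabs approx_net_tendsto[OF lin nc mu(1)])
    then have "Limsup F (\<lambda>a. ereal \<bar>fa_integral \<Omega> \<mu> (?f a)\<bar>) = ereal \<bar>\<phi> \<mu>\<bar>"
      using net_filter_nontrivial[OF approx_index_directed] unfolding F_def by (intro lim_imp_Limsup) auto
    moreover have "\<bar>fa_integral \<Omega> \<mu> (?f b)\<bar> \<le> sup_norm \<Omega> (?f b)" if "b \<in> approx_index \<Omega> M" for b
      using fa_integral_bound[OF mu(1) good(2)[OF that]] sup_norm_nonneg[OF good(2)[OF that]] mu(2)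
      by (smt (verit, best) mult_left_le)
    then have "\<forall>b\<in>approx_index \<Omega> M. approx_le a0 b \<longrightarrow>
        ereal \<bar>fa_integral \<Omega> \<mu> (?f b)\<bar> \<le> ereal (sup_norm \<Omega> (?f b))"
      by simp
    then have "eventually (\<lambda>a. ereal \<bar>fa_integral \<Omega> \<mu> (?f a)\<bar> \<le> ereal (sup_norm \<Omega> (?f a))) F"
      unfolding ev using a0 by blast
    then have "Limsup F (\<lambda>a. ereal \<bar>fa_integral \<Omega> \<mu> (?f a)\<bar>) \<le> ?L" by (rule Limsup_mono)
    ultimately show ?thesis by simp
  qed
  have "ereal K \<le> ?L"
  proof (cases ?L)
    case (real r)
    then have "\<bar>\<phi> \<mu>\<bar> \<le> r" if "\<mu> \<in> ba \<Omega> M" "tot_var M \<mu> \<Omega> \<le> 1" for \<mu>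
      using ge[OF that] by simp
    then have "functional_norm \<Omega> M \<phi> \<le> r" by (rule functional_norm_least[OF lin])
    then show ?thesis using real unfolding K_def by simp
  next
    case MInf
    then show ?thesis using ge[OF ba_zero] tot_var_zero by simp
  qed simp
  with upper show ?thesis by (rule antisym)
qed

lemma approx_net_representing:
  assumes lin: "linear_on_ba \<Omega> M \<phi>" and nc: "norm_continuous_on_ba \<Omega> M \<phi>"
  shows "representing_net \<Omega> M \<phi> (approx_index \<Omega> M) approx_le (approx_net \<Omega> M \<phi> (functional_norm \<Omega> M \<phi>))"
  unfolding representing_net_def
  using approx_index_directed approx_net_simple_bounded(2,3)[OF lin nc] approx_net_L1_cauchy[OF lin nc]
    approx_net_limsup[OF lin nc] approx_net_tendsto[OF lin nc]
  by blast

end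

section \<open>Transporting the net to the index type of the statement\<close>

lemma net_filter_reindex:
  assumes g: "inj g" and d: "directed_set J le"
  shows "directed_set (g ` J) (\<lambda>a b. le (inv g a) (inv g b))"
    "net_filter (g ` J) (\<lambda>a b. le (inv g a) (inv g b)) = filtermap g (net_filter J le)"
proof -
  have iv: "\<And>x. inv g (g x) = x" using g by (simp add: inv_f_f)
  let ?le = "\<lambda>a b. le (inv g a) (inv g b)"
  note dJ = directed_setD[OF d]
  show d': "directed_set (g ` J) ?le"
    unfolding directed_set_def
  proof (intro conjI ballI impI)
    show "g ` J \<noteq> {}" using dJ(1) by simp
    show "?le a a" if "a \<in> g ` J" for a using that dJ(2) iv by auto
    show "?le a c" if abc: "a \<in> g ` J" "b \<in> g ` J" "c \<in> g ` J" "?le a b" "?le b c" for a b c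
    proof -
      obtain x y z where "x \<in> J" "y \<in> J" "z \<in> J" "a = g x" "b = g y" "c = g z"
        using abc(1-3) by auto
      then show ?thesis using dJ(3) iv abc(4,5) by metis
    qed
    fix a b assume "a \<in> g ` J" "b \<in> g ` J"
    then obtain x y where xy: "x \<in> J" "y \<in> J" "a = g x" "b = g y" by auto
    then obtain z where "z \<in> J" "le x z" "le y z" using dJ(4) by blast
    then show "\<exists>c\<in>g ` J. ?le a c \<and> ?le b c" using xy iv by auto
  qed
  show "net_filter (g ` J) ?le = filtermap g (net_filter J le)"
  proof (rule filter_eq_iff[THEN iffD2], intro allI)
    fix P
    have "eventually P (net_filter (g ` J) ?le) \<longleftrightarrow> (\<exists>a\<in>g ` J. \<forall>b\<in>g ` J. ?le a b \<longrightarrow> P b)"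
      by (rule eventually_net_filter[OF d'])
    also have "\<dots> \<longleftrightarrow> (\<exists>x\<in>J. \<forall>y\<in>J. le x y \<longrightarrow> P (g y))" using iv by auto
    also have "\<dots> \<longleftrightarrow> eventually (\<lambda>x. P (g x)) (net_filter J le)"
      by (rule eventually_net_filter[OF d, symmetric])
    also have "\<dots> \<longleftrightarrow> eventually P (filtermap g (net_filter J le))" by (simp add: eventually_filtermap)
    finally show "eventually P (net_filter (g ` J) ?le) = eventually P (filtermap g (net_filter J le))" .
  qed
qed

lemma representing_net_reindex:
  assumes g: "inj g" and rn: "representing_net \<Omega> A \<phi> J le F"
  shows "representing_net \<Omega> A \<phi> (g ` J) (\<lambda>a b. le (inv g a) (inv g b)) (\<lambda>a. F (inv g a))"
proof -
  have iv: "\<And>x. inv g (g x) = x" using g by (simp add: inv_f_f)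
  have d: "directed_set J le" using rn unfolding representing_net_def by blast
  note filt = net_filter_reindex[OF g d]
  have cauchy: "L1_cauchy_net \<Omega> A \<mu> (g ` J) (\<lambda>a b. le (inv g a) (inv g b)) (\<lambda>a. F (inv g a))"
    if c: "L1_cauchy_net \<Omega> A \<mu> J le F" for \<mu>
    unfolding L1_cauchy_net_def
  proof (intro allI impI)
    fix e :: real assume "0 < e"
    then obtain a0 where "a0 \<in> J" and a0: "\<forall>a1\<in>J. \<forall>a2\<in>J. le a0 a1 \<longrightarrow> le a0 a2 \<longrightarrow>
        fa_integral \<Omega> (tot_var A \<mu>) (\<lambda>x. \<bar>F a1 x - F a2 x\<bar>) < e"
      using c unfolding L1_cauchy_net_def by blast
    then show "\<exists>a0\<in>g ` J. \<forall>a1\<in>g ` J. \<forall>a2\<in>g ` J. le (inv g a0) (inv g a1) \<longrightarrow> le (inv g a0) (inv g a2) \<longrightarrow>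
        fa_integral \<Omega> (tot_var A \<mu>) (\<lambda>x. \<bar>F (inv g a1) x - F (inv g a2) x\<bar>) < e"
      using iv by (intro bexI[of _ "g a0"]) auto
  qed
  show ?thesis
    unfolding representing_net_def
  proof (intro conjI ballI)
    show "directed_set (g ` J) (\<lambda>a b. le (inv g a) (inv g b))" by (rule filt(1))
    show "simple_fun \<Omega> A (F (inv g a))" if "a \<in> g ` J" for a
      using rn that iv unfolding representing_net_def by auto
    obtain B where "\<forall>a\<in>J. sup_norm \<Omega> (F a) \<le> B" using rn unfolding representing_net_def by blast
    then show "\<exists>B. \<forall>a\<in>g ` J. sup_norm \<Omega> (F (inv g a)) \<le> B" using iv by auto
    show "L1_cauchy_net \<Omega> A \<mu> (g ` J) (\<lambda>a b. le (inv g a) (inv g b)) (\<lambda>a. F (inv g a))"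
      if "\<mu> \<in> ba \<Omega> A" for \<mu>
      using cauchy rn that unfolding representing_net_def by blast
    show "((\<lambda>a. fa_integral \<Omega> \<mu> (F (inv g a))) \<longlongrightarrow> \<phi> \<mu>) (net_filter (g ` J) (\<lambda>a b. le (inv g a) (inv g b)))"
      if "\<mu> \<in> ba \<Omega> A" for \<mu>
      using rn that unfolding representing_net_def filt(2) filterlim_filtermap iv by blast
    show "Limsup (net_filter (g ` J) (\<lambda>a b. le (inv g a) (inv g b))) (\<lambda>a. ereal (sup_norm \<Omega> (F (inv g a))))
        = ereal (functional_norm \<Omega> A \<phi>)"
      using rn unfolding representing_net_def filt(2) Limsup_filtermap_eq[OF g] iv by blast
  qed
qed

text \<open>An injective code of the pairs (m, n) as pairs of a real function and a set of real
  functions: n becomes a constant function, and m is encoded by its graph, each value m(E)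
  being stored as the function equal to \<open>exp(m E)\<close> on E and \<open>-exp(m E)\<close> off E.\<close>
definition signed_exp_indicator :: "'a set \<Rightarrow> real \<Rightarrow> 'a \<Rightarrow> real" where
  "signed_exp_indicator E r = (\<lambda>x. if x \<in> E then exp r else - exp r)"

definition index_code :: "('a set \<Rightarrow> real) \<times> nat \<Rightarrow> ('a \<Rightarrow> real) \<times> ('a \<Rightarrow> real) set" where
  "index_code a = ((\<lambda>x. real (snd a)), range (\<lambda>E. signed_exp_indicator E (fst a E)))"

lemma signed_exp_indicator_inj:
  assumes "signed_exp_indicator E r = signed_exp_indicator E' r'"
  shows "E = E'" "r = r'"
proof -
  have v: "\<And>x. (if x \<in> E then exp r else - exp r) = (if x \<in> E' then exp r' else - exp r')"
    using assms unfolding signed_exp_indicator_def by metis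
  show "E = E'"
  proof (rule set_eqI)
    fix x
    have "0 < exp r" "0 < exp r'" by auto
    then show "x \<in> E \<longleftrightarrow> x \<in> E'" using v[of x] by (cases "x \<in> E"; cases "x \<in> E'") auto
  qed
  then have "exp r = exp r'" using v[of undefined] by (cases "undefined \<in> E") auto
  then show "r = r'" by simp
qed

lemma index_code_inj: "inj index_code"
proof (rule injI)
  fix a b :: "('a set \<Rightarrow> real) \<times> nat" assume ab: "index_code a = index_code b"
  then have "real (snd a) = real (snd b)" unfolding index_code_def by (metis fst_conv)
  moreover have "fst a = fst b"
  proof
    fix E
    have "signed_exp_indicator E (fst a E) \<in> range (\<lambda>E. signed_exp_indicator E (fst b E))"
      using ab unfolding index_code_def by (metis rangeI snd_conv)
    then obtain E' where "signed_exp_indicator E (fst a E) = signed_exp_indicator E' (fst b E')" by auto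
    then show "fst a E = fst b E" using signed_exp_indicator_inj by metis
  qed
  ultimately show "a = b" by (simp add: prod_eq_iff)
qed

theorem mainTheorem10:
  fixes \<Omega> :: "'a set" and A :: "'a set set" and \<phi> :: "('a set \<Rightarrow> real) \<Rightarrow> real"
  assumes "algebra \<Omega> A"
    and "linear_on_ba \<Omega> A \<phi>"
  shows "(norm_continuous_on_ba \<Omega> A \<phi> \<longrightarrow>
            (\<exists>(I :: (('a \<Rightarrow> real) \<times> ('a \<Rightarrow> real) set) set) le f. representing_net \<Omega> A \<phi> I le f))
       \<and> (\<forall>(I :: 'i set) le f. representing_net \<Omega> A \<phi> I le f \<longrightarrow> norm_continuous_on_ba \<Omega> A \<phi>)"
proof (intro conjI impI allI)
  assume "norm_continuous_on_ba \<Omega> A \<phi>"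
  then have "representing_net \<Omega> A \<phi> (approx_index \<Omega> A) approx_le (approx_net \<Omega> A \<phi> (functional_norm \<Omega> A \<phi>))"
    by (rule algebra.approx_net_representing[OF assms])
  then have "representing_net \<Omega> A \<phi> (index_code ` approx_index \<Omega> A)
      (\<lambda>a b. approx_le (inv index_code a) (inv index_code b))
      (\<lambda>a. approx_net \<Omega> A \<phi> (functional_norm \<Omega> A \<phi>) (inv index_code a))"
    by (rule representing_net_reindex[OF index_code_inj])
  then show "\<exists>(I :: (('a \<Rightarrow> real) \<times> ('a \<Rightarrow> real) set) set) le f. representing_net \<Omega> A \<phi> I le f"
    by (intro exI)
next
  fix I :: "'i set" and le f
  assume "representing_net \<Omega> A \<phi> I le f"
  then show "norm_continuous_on_ba \<Omega> A \<phi>"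
    by (rule algebra.representing_net_imp_norm_continuous[OF assms])
qed

end
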